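(* Let $R$ be a bounded dominant region of $\mathcal A^m_\Phi$ and let $w_R\in W_a$ be the unique element with $r(w_R,\alpha)=r_\alpha(\phi(R))$ for all $\alpha\in\Phi^+$. Then $w_R$ is the unique $w\in W_a$ such that $wA_\circ\subseteq R$ and, whenever $\alpha\in\Phi^+$, $r\in\mathbb Z$ and $(\alpha,x)>r$ holds for some $x\in R$, we have $(\alpha,x)>r$ for all $x\in wA_\circ$.
   Context: $\Phi$ irreducible crystallographic of rank $\ell$ in Euclidean $V$, positive system $\Phi^+$, simple roots $\Pi=\{\sigma_i\}$, highest root $\tilde\alpha$, $m\ge1$. $\mathcal A^m_\Phi$: hyperplanes $H_{\alpha,k}=\{x:(\alpha,x)=k\}$, $\alpha\in\Phi$, $0\le k\le m$; dominant: inside $\{x:(\alpha,x)>0\ \forall\alpha\in\Phi^+\}$. $W_a$: group generated by reflections in all $H_{\alpha,k}$, $k\in\mathbb Z$; $A_\circ=\{x:(\sigma_i,x)>0,\ (\tilde\alpha,x)<1\}$; $r(w,\alpha)$ is the integer $r$ with $r-1<(\alpha,x)<r$ on $wA_\circ$. $\phi(R)$ is the chain $\emptyset=\mathcal J_0\subseteq\cdots\subseteq\mathcal J_m$ with $\mathcal J_r=\{\alpha\in\Phi^+:(\alpha,x)<r \text{ on } R\}$, which is a positive geometric chain of ideals (ideals in the root poset with $(\mathcal J_i+\mathcal J_j)\cap\Phi^+\subseteq\mathcal J_{i+j}$ for $i+j\le m$, the complements $\mathcal I_i$ satisfying $(\mathcal I_i+\mathcal I_j)\cap\Phi^+\subseteq\mathcal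 I_{i+j}$ with $\mathcal I_i=\mathcal I_m$ for $i>m$, and $\Pi\subseteq\mathcal J_m$). For such a chain, $r_\alpha(\mathcal J)=\min\{r_1+\dots+r_k:\alpha=\alpha_1+\dots+\alpha_k,\ \alpha_i\in\mathcal J_{r_i}\}$; there is a unique $w\in W_a$ with $r(w,\alpha)=r_\alpha(\mathcal J)$ for all $\alpha\in\Phi^+$. *)

theory Defs
  imports "HOL-Analysis.Analysis"
begin

definition refl_vec :: "'a::euclidean_space \<Rightarrow> 'a \<Rightarrow> 'a" where
  "refl_vec \<alpha> x = x - ((2 * (\<alpha> \<bullet> x)) / (\<alpha> \<bullet> \<alpha>)) *\<^sub>R \<alpha>"

definition crystallographic_root_system :: "'a::euclidean_space set \<Rightarrow> bool" where
  "crystallographic_root_system \<Phi> \<longleftrightarrow>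
     finite \<Phi> \<and> 0 \<notin> \<Phi> \<and> span \<Phi> = UNIV \<and>
     (\<forall>\<alpha>\<in>\<Phi>. \<forall>\<beta>\<in>\<Phi>. refl_vec \<alpha> \<beta> \<in> \<Phi>) \<and>
     (\<forall>\<alpha>\<in>\<Phi>. \<forall>c::real. c *\<^sub>R \<alpha> \<in> \<Phi> \<longrightarrow> c = 1 \<or> c = -1) \<and>
     (\<forall>\<alpha>\<in>\<Phi>. \<forall>\<beta>\<in>\<Phi>. (2 * (\<alpha> \<bullet> \<beta>)) / (\<alpha> \<bullet> \<alpha>) \<in> \<int>)"

definition irreducible_rs :: "'a::euclidean_space set \<Rightarrow> bool" where
  "irreducible_rs \<Phi> \<longleftrightarrow>
     \<not> (\<exists>A B. A \<union> B = \<Phi> \<and> A \<inter> B = {} \<and> A \<noteq> {} \<and> B \<noteq> {} \<and>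
            (\<forall>\<alpha>\<in>A. \<forall>\<beta>\<in>B. \<alpha> \<bullet> \<beta> = 0))"

definition nnint_comb :: "'a::euclidean_space set \<Rightarrow> 'a \<Rightarrow> bool" where
  "nnint_comb S v \<longleftrightarrow> (\<exists>c. (\<forall>\<sigma>\<in>S. c \<sigma> \<in> \<nat>) \<and> v = (\<Sum>\<sigma>\<in>S. c \<sigma> *\<^sub>R \<sigma>))"

definition simple_system :: "'a::euclidean_space set \<Rightarrow> 'a set \<Rightarrow> bool" where
  "simple_system \<Phi> S \<longleftrightarrow> S \<subseteq> \<Phi> \<and> independent S \<and>
     (\<forall>\<alpha>\<in>\<Phi>. nnint_comb S \<alpha> \<or> nnint_comb S (- \<alpha>))"

definition pos_roots :: "'a::euclidean_space set \<Rightarrow> 'a set \<Rightarrow> 'a set" where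
  "pos_roots \<Phi> S = {\<alpha>\<in>\<Phi>. nnint_comb S \<alpha>}"

definition highest_root :: "'a::euclidean_space set \<Rightarrow> 'a set \<Rightarrow> 'a \<Rightarrow> bool" where
  "highest_root \<Phi> S h \<longleftrightarrow> h \<in> pos_roots \<Phi> S \<and>
     (\<forall>\<beta>\<in>pos_roots \<Phi> S. nnint_comb S (h - \<beta>))"

definition shi_hyperplanes :: "'a::euclidean_space set \<Rightarrow> nat \<Rightarrow> 'a set set" where
  "shi_hyperplanes \<Phi> m = {{x. \<alpha> \<bullet> x = real k} | \<alpha> k. \<alpha> \<in> \<Phi> \<and> k \<le> m}"

definition is_region :: "'a::euclidean_space set \<Rightarrow> nat \<Rightarrow> 'a set \<Rightarrow> bool" where
  "is_region \<Phi> m R \<longleftrightarrow>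
     (\<exists>x. x \<notin> \<Union>(shi_hyperplanes \<Phi> m) \<and>
          R = connected_component_set (- \<Union>(shi_hyperplanes \<Phi> m)) x)"

definition dominant :: "'a::euclidean_space set \<Rightarrow> 'a set \<Rightarrow> 'a set \<Rightarrow> bool" where
  "dominant \<Phi> S R \<longleftrightarrow> R \<subseteq> {x. \<forall>\<alpha>\<in>pos_roots \<Phi> S. \<alpha> \<bullet> x > 0}"

definition aff_refl :: "'a::euclidean_space \<Rightarrow> int \<Rightarrow> 'a \<Rightarrow> 'a" where
  "aff_refl \<alpha> k x = x - (((\<alpha> \<bullet> x) - real_of_int k) * 2 / (\<alpha> \<bullet> \<alpha>)) *\<^sub>R \<alpha>"

text \<open>Group generated by the reflections in all hyperplanes H_{alpha,k}, k integer
  (the reflections are involutions, so closure under left composition suffices).\<close>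
inductive_set affine_weyl :: "'a::euclidean_space set \<Rightarrow> ('a \<Rightarrow> 'a) set" for \<Phi> where
  id_in: "id \<in> affine_weyl \<Phi>"
| refl_comp: "w \<in> affine_weyl \<Phi> \<Longrightarrow> \<alpha> \<in> \<Phi> \<Longrightarrow> aff_refl \<alpha> k \<circ> w \<in> affine_weyl \<Phi>"

definition fund_alcove :: "'a::euclidean_space set \<Rightarrow> 'a \<Rightarrow> 'a set" where
  "fund_alcove S h = {x. (\<forall>\<sigma>\<in>S. \<sigma> \<bullet> x > 0) \<and> h \<bullet> x < 1}"

definition r_of :: "'a::euclidean_space set \<Rightarrow> ('a \<Rightarrow> 'a) \<Rightarrow> 'a \<Rightarrow> int" where
  "r_of A w \<alpha> = (THE r::int. \<forall>x\<in>w ` A. real_of_int r - 1 < \<alpha> \<bullet> x \<and> \<alpha> \<bullet> x < real_of_int r)"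

definition phi_chain :: "'a::euclidean_space set \<Rightarrow> 'a set \<Rightarrow> 'a set \<Rightarrow> nat \<Rightarrow> 'a set" where
  "phi_chain \<Phi> S R r = {\<alpha>\<in>pos_roots \<Phi> S. \<forall>x\<in>R. \<alpha> \<bullet> x < real r}"

text \<open>r_alpha(J) for a chain J_0,...,J_m: minimum of r_1+...+r_k over decompositions
  alpha = alpha_1+...+alpha_k (k >= 1) with alpha_i in J_{r_i}, 0 <= r_i <= m.\<close>
definition r_alpha :: "(nat \<Rightarrow> 'a::euclidean_space set) \<Rightarrow> nat \<Rightarrow> 'a \<Rightarrow> nat" where
  "r_alpha J m \<alpha> = (LEAST n. \<exists>ps :: ('a \<times> nat) list. ps \<noteq> [] \<and>
       (\<forall>(\<beta>, i)\<in>set ps. i \<le> m \<and> \<beta> \<in> J i) \<and>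
       sum_list (map fst ps) = \<alpha> \<and> sum_list (map snd ps) = n)"

end

theory Submission
  imports Defs
begin

text \<open>Every element \<open>w\<close> of the affine Weyl group is a word in affine reflections, so it permutes
  the affine roots \<open>x \<mapsto> (\<alpha>, x) - k\<close>; hence for every root \<open>\<alpha>\<close> the alcove \<open>w A\<^sub>\<circ>\<close> lies in a
  strip \<open>r - 1 < (\<alpha>, x) < r\<close> and \<open>r(w, \<alpha>)\<close> is well defined. The group is generated by the
  reflections in the walls of \<open>A\<^sub>\<circ>\<close>, and a word in them that separates no positive affine root
  from \<open>A\<^sub>\<circ>\<close> can be shortened (deletion condition); so the action on alcoves is free and \<open>w\<close> is
  determined by the numbers \<open>r(w, \<alpha>)\<close>, \<open>\<alpha> \<in> \<Phi>\<^sup>+\<close>.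

  For a bounded dominant region \<open>R\<close>, a ray argument gives \<open>(\<sigma>, x) < m\<close> on \<open>R\<close> for simple \<open>\<sigma>\<close>,
  so every positive root has an admissible decomposition and \<open>(\<alpha>, x) < r\<^sub>\<alpha>(\<phi>(R))\<close> on \<open>R\<close>.
  If \<open>r(w, \<alpha>) = r\<^sub>\<alpha>(\<phi>(R))\<close> for all \<open>\<alpha>\<close>, then \<open>(\<alpha>, x) > r\<^sub>\<alpha> - 1\<close> on \<open>w A\<^sub>\<circ>\<close>, which is the
  minimality property; moreover \<open>w A\<^sub>\<circ>\<close> lies on the same side of each \<open>H\<^sub>\<alpha>\<^sub>,\<^sub>k\<close>, \<open>k \<le> m\<close>, as
  \<open>R\<close> (if \<open>R\<close> is below \<open>H\<^sub>\<alpha>\<^sub>,\<^sub>k\<close> then \<open>\<alpha> \<in> J\<^sub>k\<close>, so \<open>r\<^sub>\<alpha> \<le> k\<close>), hence \<open>w A\<^sub>\<circ> \<subseteq> R\<close>.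
  Conversely, any \<open>w\<close> with the two properties has \<open>r(w, \<alpha>) = r\<^sub>\<alpha>(\<phi>(R))\<close>, the lower bound coming
  from the points of \<open>w\<^sub>R A\<^sub>\<circ> \<subseteq> R\<close>; by freeness \<open>w = w\<^sub>R\<close>.\<close>

lemma r_of_eqI:
  assumes "A \<noteq> {}" "\<forall>y\<in>w ` A. of_int r - 1 < \<alpha> \<bullet> y \<and> \<alpha> \<bullet> y < of_int r"
  shows "r_of A w \<alpha> = r"
  unfolding r_of_def
proof (rule the_equality)
  fix r' assume r': "\<forall>y\<in>w ` A. of_int r' - 1 < \<alpha> \<bullet> y \<and> \<alpha> \<bullet> y < of_int r'"
  obtain x where "x \<in> A" using assms(1) by blast
  then have "of_int r' - 1 < \<alpha> \<bullet> w x" "\<alpha> \<bullet> w x < of_int r'"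
    "of_int r - 1 < \<alpha> \<bullet> w x" "\<alpha> \<bullet> w x < of_int r" using assms(2) r' by auto
  then show "r' = r" by linarith
qed (use assms(2) in blast)

locale simple_root_system =
  fixes \<Phi> S :: "'a::euclidean_space set" and h :: 'a
  assumes root_system: "crystallographic_root_system \<Phi>"
    and simple: "simple_system \<Phi> S" and highest: "highest_root \<Phi> S h"
begin

lemma finite_roots: "finite \<Phi>"
  and span_roots: "span \<Phi> = UNIV"
  and refl_vec_root: "\<alpha> \<in> \<Phi> \<Longrightarrow> \<beta> \<in> \<Phi> \<Longrightarrow> refl_vec \<alpha> \<beta> \<in> \<Phi>"
  and root_multiple: "\<alpha> \<in> \<Phi> \<Longrightarrow> c *\<^sub>R \<alpha> \<in> \<Phi> \<Longrightarrow> c = 1 \<or> c = -1"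
  and cartan_integer: "\<alpha> \<in> \<Phi> \<Longrightarrow> \<beta> \<in> \<Phi> \<Longrightarrow> 2 * (\<alpha> \<bullet> \<beta>) / (\<alpha> \<bullet> \<alpha>) \<in> \<int>"
  and root_nonzero: "\<alpha> \<in> \<Phi> \<Longrightarrow> \<alpha> \<noteq> 0"
  using root_system unfolding crystallographic_root_system_def by auto

lemma simple_subset_roots: "S \<subseteq> \<Phi>"
  and independent_simple: "independent S"
  and root_sign: "\<alpha> \<in> \<Phi> \<Longrightarrow> nnint_comb S \<alpha> \<or> nnint_comb S (- \<alpha>)"
  using simple unfolding simple_system_def by auto

lemma finite_simple: "finite S"
  using simple_subset_roots finite_roots finite_subset by blast

lemma inner_self_root_pos: "\<alpha> \<in> \<Phi> \<Longrightarrow> \<alpha> \<bullet> \<alpha> > 0"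
  using root_nonzero by simp

lemma uminus_root: assumes "\<alpha> \<in> \<Phi>" shows "- \<alpha> \<in> \<Phi>"
proof -
  have "refl_vec \<alpha> \<alpha> = - \<alpha>"
    using inner_self_root_pos[OF assms] by (simp add: refl_vec_def scaleR_2)
  then show ?thesis using refl_vec_root[OF assms assms] by simp
qed

lemma negative_root:
  assumes "\<alpha> \<in> \<Phi>" "\<not> nnint_comb S \<alpha>" shows "- \<alpha> \<in> \<Phi>" "nnint_comb S (- \<alpha>)"
  using assms root_sign uminus_root by auto

lemma highest_root_in: "h \<in> \<Phi>" "nnint_comb S h"
  and highest_root_above: "\<alpha> \<in> \<Phi> \<Longrightarrow> nnint_comb S \<alpha> \<Longrightarrow> nnint_comb S (h - \<alpha>)"
  using highest unfolding highest_root_def pos_roots_def by auto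

lemma pos_roots_iff: "\<alpha> \<in> pos_roots \<Phi> S \<longleftrightarrow> \<alpha> \<in> \<Phi> \<and> nnint_comb S \<alpha>"
  unfolding pos_roots_def by simp

section \<open>Coordinates with respect to the simple roots\<close>

lemma nnint_comb_in_span: "nnint_comb S v \<Longrightarrow> v \<in> span S"
  unfolding nnint_comb_def by (auto intro: span_sum span_scale span_base)

lemma span_simple: "span S = UNIV"
proof -
  have "\<Phi> \<subseteq> span S"
    using root_sign nnint_comb_in_span span_neg by fastforce
  then show ?thesis using span_roots span_minimal[of \<Phi> "span S"] by auto
qed

lemma dual_vector_exists:
  assumes "\<sigma> \<in> S" shows "\<exists>\<omega>. \<forall>\<tau>\<in>S. \<omega> \<bullet> \<tau> = (if \<tau> = \<sigma> then 1 else 0)"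
proof -
  obtain y z where y: "y \<in> span (S - {\<sigma>})" and z: "\<And>w. w \<in> span (S - {\<sigma>}) \<Longrightarrow> orthogonal z w"
    and decomp: "\<sigma> = y + z"
    using orthogonal_subspace_decomp_exists[of "S - {\<sigma>}" \<sigma>] by metis
  have "\<sigma> \<notin> span (S - {\<sigma>})" using independent_simple assms unfolding dependent_def by auto
  then have "z \<bullet> z > 0" using decomp y by auto
  moreover have "z \<bullet> \<sigma> = z \<bullet> z"
    using z[OF y] decomp by (simp add: orthogonal_def inner_add_right)
  moreover have "z \<bullet> \<tau> = 0" if "\<tau> \<in> S" "\<tau> \<noteq> \<sigma>" for \<tau>
    using z[of \<tau>] that by (simp add: orthogonal_def span_base)
  ultimately have "\<forall>\<tau>\<in>S. (inverse (z \<bullet> z) *\<^sub>R z) \<bullet> \<tau> = (if \<tau> = \<sigma> then 1 else 0)"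
    by auto
  then show ?thesis ..
qed

definition coweight :: "'a \<Rightarrow> 'a" where
  "coweight \<sigma> = (SOME \<omega>. \<forall>\<tau>\<in>S. \<omega> \<bullet> \<tau> = (if \<tau> = \<sigma> then 1 else 0))"

definition coord :: "'a \<Rightarrow> 'a \<Rightarrow> real" where
  "coord \<sigma> v = coweight \<sigma> \<bullet> v"

lemma coord_simple: "\<sigma> \<in> S \<Longrightarrow> \<tau> \<in> S \<Longrightarrow> coord \<sigma> \<tau> = (if \<tau> = \<sigma> then 1 else 0)"
  unfolding coord_def coweight_def using someI_ex[OF dual_vector_exists] by blast

lemma coord_sum: assumes "\<sigma> \<in> S" shows "coord \<sigma> (\<Sum>\<tau>\<in>S. c \<tau> *\<^sub>R \<tau>) = c \<sigma>"
proof -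
  have "coord \<sigma> (\<Sum>\<tau>\<in>S. c \<tau> *\<^sub>R \<tau>) = (\<Sum>\<tau>\<in>S. c \<tau> * coord \<sigma> \<tau>)"
    unfolding coord_def by (simp add: inner_sum_right)
  also have "\<dots> = (\<Sum>\<tau>\<in>S. if \<tau> = \<sigma> then c \<sigma> else 0)"
    using coord_simple[OF assms] by (intro sum.cong) auto
  finally show ?thesis using assms finite_simple by simp
qed

lemma simple_expansion: "v = (\<Sum>\<sigma>\<in>S. coord \<sigma> v *\<^sub>R \<sigma>)"
proof -
  obtain c where c: "v = (\<Sum>\<tau>\<in>S. c \<tau> *\<^sub>R \<tau>)"
    using span_simple span_finite[OF finite_simple] by auto
  then have "(\<Sum>\<sigma>\<in>S. coord \<sigma> v *\<^sub>R \<sigma>) = (\<Sum>\<tau>\<in>S. c \<tau> *\<^sub>R \<tau>)"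
    using coord_sum by (intro sum.cong) auto
  then show ?thesis using c by simp
qed

lemma inner_simple_expansion: "v \<bullet> x = (\<Sum>\<sigma>\<in>S. coord \<sigma> v * (\<sigma> \<bullet> x))"
  by (subst simple_expansion[of v]) (simp add: inner_sum_left)

lemma coords_zero_imp_zero: "\<forall>\<sigma>\<in>S. coord \<sigma> v = 0 \<Longrightarrow> v = 0"
  using simple_expansion[of v] by simp

lemma nnint_comb_iff_coord: "nnint_comb S v \<longleftrightarrow> (\<forall>\<sigma>\<in>S. coord \<sigma> v \<in> \<nat>)"
proof
  assume "nnint_comb S v"
  then obtain c where "\<forall>\<sigma>\<in>S. c \<sigma> \<in> \<nat>" "v = (\<Sum>\<sigma>\<in>S. c \<sigma> *\<^sub>R \<sigma>)"
    unfolding nnint_comb_def by auto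
  then show "\<forall>\<sigma>\<in>S. coord \<sigma> v \<in> \<nat>" using coord_sum by simp
next
  assume "\<forall>\<sigma>\<in>S. coord \<sigma> v \<in> \<nat>"
  then show "nnint_comb S v"
    unfolding nnint_comb_def by (intro exI[of _ "\<lambda>\<sigma>. coord \<sigma> v"]) (simp add: simple_expansion[symmetric])
qed

lemma coord_nonneg: "nnint_comb S v \<Longrightarrow> \<sigma> \<in> S \<Longrightarrow> coord \<sigma> v \<ge> 0"
  unfolding nnint_comb_iff_coord by (auto elim!: Nats_cases)

lemma simple_nnint_comb: "\<sigma> \<in> S \<Longrightarrow> nnint_comb S \<sigma>"
  unfolding nnint_comb_iff_coord by (simp add: coord_simple)

lemma nnint_comb_inner_nonneg:
  assumes "nnint_comb S v" "\<forall>\<sigma>\<in>S. \<sigma> \<bullet> x \<ge> 0" shows "v \<bullet> x \<ge> 0"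
  unfolding inner_simple_expansion[of v]
  using coord_nonneg[OF assms(1)] assms(2) by (intro sum_nonneg) simp

lemma nnint_comb_inner_pos:
  assumes "nnint_comb S v" "v \<noteq> 0" "\<forall>\<sigma>\<in>S. \<sigma> \<bullet> x > 0" shows "v \<bullet> x > 0"
proof -
  obtain \<sigma> where \<sigma>: "\<sigma> \<in> S" "coord \<sigma> v \<noteq> 0" using coords_zero_imp_zero assms(2) by blast
  have "0 < (\<Sum>\<sigma>\<in>S. coord \<sigma> v * (\<sigma> \<bullet> x))"
    using coord_nonneg[OF assms(1)] assms(3) \<sigma>
    by (intro sum_pos2[OF finite_simple \<sigma>(1)]) (auto intro: mult_pos_pos less_imp_le
        simp: order.not_eq_order_implies_strict)
  then show ?thesis using inner_simple_expansion[of v x] by simp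
qed

lemma root_inner_le_highest:
  assumes "\<alpha> \<in> \<Phi>" "nnint_comb S \<alpha>" "\<forall>\<sigma>\<in>S. \<sigma> \<bullet> x \<ge> 0" shows "\<alpha> \<bullet> x \<le> h \<bullet> x"
  using nnint_comb_inner_nonneg[OF highest_root_above[OF assms(1,2)] assms(3)]
  by (simp add: inner_diff_left)

section \<open>The fundamental alcove\<close>

abbreviation alcove :: "'a set" where
  "alcove \<equiv> fund_alcove S h"

lemma alcove_pos_root:
  assumes "x \<in> alcove" "\<alpha> \<in> \<Phi>" "nnint_comb S \<alpha>" shows "0 < \<alpha> \<bullet> x" "\<alpha> \<bullet> x < 1"
proof -
  have x: "\<forall>\<sigma>\<in>S. \<sigma> \<bullet> x > 0" "h \<bullet> x < 1" using assms(1) unfolding fund_alcove_def by auto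
  show "0 < \<alpha> \<bullet> x" using nnint_comb_inner_pos[OF assms(3) root_nonzero[OF assms(2)] x(1)] .
  have "\<alpha> \<bullet> x \<le> h \<bullet> x" using root_inner_le_highest[OF assms(2,3)] x(1) by (simp add: less_imp_le)
  with x(2) show "\<alpha> \<bullet> x < 1" by simp
qed

lemma alcove_neg_root:
  assumes "x \<in> alcove" "\<alpha> \<in> \<Phi>" "\<not> nnint_comb S \<alpha>" shows "-1 < \<alpha> \<bullet> x" "\<alpha> \<bullet> x < 0"
  using alcove_pos_root[OF assms(1) negative_root[OF assms(2,3)]] by auto

lemma alcoveI: "\<forall>\<alpha>\<in>\<Phi>. nnint_comb S \<alpha> \<longrightarrow> 0 < \<alpha> \<bullet> x \<and> \<alpha> \<bullet> x < 1 \<Longrightarrow> x \<in> alcove"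
  using simple_nnint_comb simple_subset_roots highest_root_in unfolding fund_alcove_def by auto

definition rho_vee :: 'a where
  "rho_vee = (\<Sum>\<sigma>\<in>S. coweight \<sigma>)"

definition height :: "'a \<Rightarrow> real" where
  "height v = v \<bullet> rho_vee"

lemma height_eq_sum_coord: "height v = (\<Sum>\<sigma>\<in>S. coord \<sigma> v)"
  unfolding height_def rho_vee_def coord_def by (simp add: inner_sum_right inner_commute)

lemma height_simple: "\<sigma> \<in> S \<Longrightarrow> height \<sigma> = 1"
  using finite_simple unfolding height_eq_sum_coord
  by (simp add: coord_simple if_distrib[of "\<lambda>x. x = _"] sum.delta')

lemma height_diff: "height (u - v) = height u - height v"
  and height_uminus: "height (- v) = - height v"
  unfolding height_def by (simp_all add: inner_diff_left)

lemma height_in_Ints: "\<alpha> \<in> \<Phi> \<Longrightarrow> height \<alpha> \<in> \<int>"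
proof -
  have "height v \<in> \<int>" if "nnint_comb S v" for v
    using that Nats_subset_Ints unfolding height_eq_sum_coord nnint_comb_iff_coord
    by (intro Ints_sum) auto
  then show "\<alpha> \<in> \<Phi> \<Longrightarrow> height \<alpha> \<in> \<int>"
    using root_sign height_uminus by (metis Ints_minus minus_minus)
qed

lemma height_ge_one: assumes "\<alpha> \<in> \<Phi>" "nnint_comb S \<alpha>" shows "height \<alpha> \<ge> 1"
proof -
  have "height \<alpha> > 0"
    using nnint_comb_inner_pos[OF assms(2) root_nonzero[OF assms(1)]] height_simple
    by (simp add: height_def)
  with height_in_Ints[OF assms(1)] show ?thesis by (auto elim!: Ints_cases)
qed

lemma height_eq_highest:
  assumes "\<alpha> \<in> \<Phi>" "nnint_comb S \<alpha>" "height \<alpha> = height h" shows "\<alpha> = h"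
proof -
  have "(\<Sum>\<sigma>\<in>S. coord \<sigma> (h - \<alpha>)) = 0"
    using assms(3) by (simp add: height_eq_sum_coord[symmetric] height_diff)
  then have "\<forall>\<sigma>\<in>S. coord \<sigma> (h - \<alpha>) = 0"
    using coord_nonneg[OF highest_root_above[OF assms(1,2)]] finite_simple
    by (simp add: sum_nonneg_eq_0_iff)
  then show ?thesis using coords_zero_imp_zero by force
qed

text \<open>Any point of the alcove would do below, except in \<open>pos_aff_root_conj_simple\<close>, where the
  values of affine roots at this point, which lie in \<open>\<int> / (height h + 1)\<close>, serve as induction
  measure.\<close>
definition base_point :: 'a where
  "base_point = (1 / (height h + 1)) *\<^sub>R rho_vee"

lemma inner_base_point: "v \<bullet> base_point = height v / (height h + 1)"
  unfolding base_point_def height_def by simp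

lemma base_point_in_alcove: "base_point \<in> alcove"
proof -
  have "height h \<ge> 1" using height_ge_one highest_root_in by blast
  then show ?thesis by (simp add: fund_alcove_def inner_base_point height_simple)
qed

definition closed_alcove :: "'a set" where
  "closed_alcove = {q. (\<forall>\<sigma>\<in>S. \<sigma> \<bullet> q \<ge> 0) \<and> h \<bullet> q \<le> 1}"

lemma closed_alcove_segment:
  assumes "q \<in> closed_alcove" "x \<in> alcove" "0 < t" "t \<le> 1"
  shows "(1 - t) *\<^sub>R q + t *\<^sub>R x \<in> alcove"
proof -
  have q: "\<forall>\<sigma>\<in>S. \<sigma> \<bullet> q \<ge> 0" "h \<bullet> q \<le> 1" using assms(1) unfolding closed_alcove_def by auto
  have x: "\<forall>\<sigma>\<in>S. \<sigma> \<bullet> x > 0" "h \<bullet> x < 1" using assms(2) unfolding fund_alcove_def by auto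
  have "\<sigma> \<bullet> ((1 - t) *\<^sub>R q + t *\<^sub>R x) > 0" if "\<sigma> \<in> S" for \<sigma>
    using q(1) x(1) that assms(3,4) by (simp add: inner_add_right add_nonneg_pos)
  moreover have "(1 - t) * (h \<bullet> q) \<le> 1 - t" "t * (h \<bullet> x) < t"
    using q(2) x(2) assms(3,4) by (simp_all add: mult_left_le)
  then have "h \<bullet> ((1 - t) *\<^sub>R q + t *\<^sub>R x) < 1" by (simp add: inner_add_right)
  ultimately show ?thesis unfolding fund_alcove_def by auto
qed

end

section \<open>Affine roots and affine reflections\<close>

text \<open>An affine root is a pair \<open>(\<alpha>, k)\<close>, standing for the affine function
  \<open>x \<mapsto> (\<alpha>, x) - k\<close> whose zero set is \<open>H\<^sub>\<alpha>\<^sub>,\<^sub>k\<close>.\<close>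

definition aff_eval :: "'a::euclidean_space \<times> int \<Rightarrow> 'a \<Rightarrow> real" where
  "aff_eval a x = fst a \<bullet> x - of_int (snd a)"

definition aff_reflection :: "'a::euclidean_space \<times> int \<Rightarrow> 'a \<Rightarrow> 'a" where
  "aff_reflection a = aff_refl (fst a) (snd a)"

definition cartan :: "'a::euclidean_space \<Rightarrow> 'a \<Rightarrow> int" where
  "cartan \<alpha> \<beta> = \<lfloor>2 * (\<alpha> \<bullet> \<beta>) / (\<beta> \<bullet> \<beta>)\<rfloor>"

text \<open>The image of the affine root \<open>a\<close> under the reflection in \<open>b\<close>.\<close>
definition refl_root :: "'a::euclidean_space \<times> int \<Rightarrow> 'a \<times> int \<Rightarrow> 'a \<times> int" where
  "refl_root b a = (refl_vec (fst b) (fst a), snd a - snd b * cartan (fst a) (fst b))"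

fun refl_word :: "('a::euclidean_space \<times> int) list \<Rightarrow> 'a \<Rightarrow> 'a" where
  "refl_word [] = id"
| "refl_word (b # bs) = aff_reflection b \<circ> refl_word bs"

lemma aff_reflection_eq: "aff_reflection a x = x - (aff_eval a x * 2 / (fst a \<bullet> fst a)) *\<^sub>R fst a"
  unfolding aff_reflection_def aff_refl_def aff_eval_def by simp

lemma aff_eval_inject: assumes "aff_eval a = aff_eval b" shows "a = b"
proof -
  have eq: "aff_eval a x = aff_eval b x" for x using assms by simp
  have k: "snd a = snd b" using eq[of 0] by (simp add: aff_eval_def)
  have "fst a \<bullet> x = fst b \<bullet> x" for x using eq[of x] k by (simp add: aff_eval_def)
  then have "fst a = fst b" by (metis vector_eq_rdot)
  with k show ?thesis by (simp add: prod_eq_iff)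
qed

lemma aff_eval_uminus: "aff_eval (- a) x = - aff_eval a x"
  unfolding aff_eval_def by simp

lemma aff_reflection_uminus: "aff_reflection (- a) = aff_reflection a"
  by (rule ext) (simp add: aff_reflection_eq aff_eval_uminus)

lemma aff_eval_segment: "aff_eval a ((1 - t) *\<^sub>R p + t *\<^sub>R q) = (1 - t) * aff_eval a p + t * aff_eval a q"
  unfolding aff_eval_def by (simp add: inner_add_right algebra_simps)

lemma refl_word_append [simp]: "refl_word (xs @ ys) x = refl_word xs (refl_word ys x)"
  by (induction xs) auto

context simple_root_system
begin

definition aff_roots :: "('a \<times> int) set" where
  "aff_roots = \<Phi> \<times> UNIV"

lemma mem_aff_roots: "a \<in> aff_roots \<longleftrightarrow> fst a \<in> \<Phi>"
  unfolding aff_roots_def by (cases a) auto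

lemma cartan_eq: "\<alpha> \<in> \<Phi> \<Longrightarrow> \<beta> \<in> \<Phi> \<Longrightarrow> of_int (cartan \<alpha> \<beta>) = 2 * (\<alpha> \<bullet> \<beta>) / (\<beta> \<bullet> \<beta>)"
  using cartan_integer[of \<beta> \<alpha>] unfolding cartan_def by (metis Ints_cases floor_of_int inner_commute)

lemma cartan_ge_one: "\<alpha> \<in> \<Phi> \<Longrightarrow> \<beta> \<in> \<Phi> \<Longrightarrow> \<alpha> \<bullet> \<beta> > 0 \<Longrightarrow> cartan \<alpha> \<beta> \<ge> 1"
  using cartan_eq inner_self_root_pos
  by (metis divide_pos_pos int_one_le_iff_zero_less mult_pos_pos of_int_0_less_iff zero_less_numeral)

lemma refl_root_in: "a \<in> aff_roots \<Longrightarrow> b \<in> aff_roots \<Longrightarrow> refl_root b a \<in> aff_roots"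
  unfolding mem_aff_roots refl_root_def using refl_vec_root by auto

lemma uminus_aff_root: "a \<in> aff_roots \<Longrightarrow> - a \<in> aff_roots"
  unfolding mem_aff_roots using uminus_root by simp

lemma aff_eval_refl_root:
  assumes "a \<in> aff_roots" "b \<in> aff_roots"
  shows "aff_eval (refl_root b a) x = aff_eval a x - of_int (cartan (fst a) (fst b)) * aff_eval b x"
proof -
  have "refl_vec (fst b) (fst a) = fst a - of_int (cartan (fst a) (fst b)) *\<^sub>R fst b"
    using assms cartan_eq unfolding mem_aff_roots refl_vec_def by (simp add: inner_commute)
  then show ?thesis unfolding refl_root_def aff_eval_def
    by (simp only: fst_conv snd_conv) (simp add: inner_diff_left algebra_simps)
qed

lemma aff_eval_reflection:
  assumes "a \<in> aff_roots" "b \<in> aff_roots"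
  shows "aff_eval a (aff_reflection b x) = aff_eval (refl_root b a) x"
proof -
  have "fst b \<bullet> fst b \<noteq> 0" using assms(2) inner_self_root_pos by (simp add: mem_aff_roots)
  then have "aff_eval a (aff_reflection b x)
      = aff_eval a x - (2 * (fst a \<bullet> fst b) / (fst b \<bullet> fst b)) * aff_eval b x"
    by (simp add: aff_reflection_eq aff_eval_def inner_diff_right field_simps)
  then show ?thesis
    using assms cartan_eq aff_eval_refl_root by (simp add: mem_aff_roots)
qed

lemma aff_eval_reflection_self: "b \<in> aff_roots \<Longrightarrow> aff_eval b (aff_reflection b x) = - aff_eval b x"
  using inner_self_root_pos
  by (simp add: aff_reflection_eq aff_eval_def mem_aff_roots inner_diff_right)

lemma aff_reflection_involution:
  assumes "b \<in> aff_roots" shows "aff_reflection b (aff_reflection b x) = x"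
proof -
  have "aff_reflection b (aff_reflection b x)
      = aff_reflection b x - (aff_eval b (aff_reflection b x) * 2 / (fst b \<bullet> fst b)) *\<^sub>R fst b"
    by (rule aff_reflection_eq)
  also have "\<dots> = aff_reflection b x + (aff_eval b x * 2 / (fst b \<bullet> fst b)) *\<^sub>R fst b"
    using aff_eval_reflection_self[OF assms] by simp
  also have "\<dots> = x" by (simp add: aff_reflection_eq[of b x])
  finally show ?thesis .
qed

lemma refl_root_involution:
  assumes "a \<in> aff_roots" "b \<in> aff_roots" shows "refl_root b (refl_root b a) = a"
proof (rule aff_eval_inject, rule ext)
  fix x
  show "aff_eval (refl_root b (refl_root b a)) x = aff_eval a x"
    using aff_eval_reflection[OF refl_root_in[OF assms] assms(2)] aff_eval_reflection[OF assms]
      aff_reflection_involution[OF assms(2)] by metis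
qed

lemma refl_root_self: "b \<in> aff_roots \<Longrightarrow> refl_root b b = - b"
  by (intro aff_eval_inject ext)
    (metis aff_eval_reflection aff_eval_reflection_self aff_eval_uminus)

lemma refl_root_uminus:
  assumes "a \<in> aff_roots" "b \<in> aff_roots" shows "refl_root b (- a) = - refl_root b a"
  by (intro aff_eval_inject ext)
    (metis aff_eval_reflection aff_eval_uminus assms uminus_aff_root)

lemma aff_reflection_conj:
  assumes "a \<in> aff_roots" "b \<in> aff_roots"
  shows "aff_reflection b (aff_reflection a (aff_reflection b x)) = aff_reflection (refl_root b a) x"
proof -
  let ?y = "aff_reflection b x" and ?c = "aff_eval a (aff_reflection b x) * 2 / (fst a \<bullet> fst a)"
  have linear: "aff_reflection b (y - t *\<^sub>R \<alpha>) = aff_reflection b y - t *\<^sub>R refl_vec (fst b) \<alpha>" for y t \<alpha>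
    unfolding aff_reflection_def aff_refl_def refl_vec_def
    by (simp add: inner_diff_right algebra_simps inner_commute diff_divide_distrib add_divide_distrib)
  have "fst b \<noteq> 0" using assms(2) root_nonzero by (simp add: mem_aff_roots)
  then have norm_refl: "refl_vec (fst b) (fst a) \<bullet> refl_vec (fst b) (fst a) = fst a \<bullet> fst a"
    unfolding refl_vec_def
    by (simp add: inner_diff_left inner_diff_right inner_commute power2_eq_square field_simps)
  have "aff_reflection b (aff_reflection a ?y) = aff_reflection b (?y - ?c *\<^sub>R fst a)"
    by (simp add: aff_reflection_eq[of a])
  also have "\<dots> = x - ?c *\<^sub>R refl_vec (fst b) (fst a)"
    by (simp only: linear aff_reflection_involution[OF assms(2)])
  also have "\<dots> = aff_reflection (refl_root b a) x"
    unfolding aff_reflection_eq[of "refl_root b a"] using aff_eval_reflection[OF assms] norm_refl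
    by (simp add: refl_root_def)
  finally show ?thesis .
qed

lemma fold_refl_root_in:
  "set bs \<subseteq> aff_roots \<Longrightarrow> a \<in> aff_roots \<Longrightarrow> fold refl_root bs a \<in> aff_roots"
  by (induction bs arbitrary: a) (auto simp: refl_root_in)

lemma foldr_refl_root_in:
  "set bs \<subseteq> aff_roots \<Longrightarrow> a \<in> aff_roots \<Longrightarrow> foldr refl_root bs a \<in> aff_roots"
  by (simp add: foldr_conv_fold fold_refl_root_in)

lemma aff_eval_refl_word:
  "set bs \<subseteq> aff_roots \<Longrightarrow> a \<in> aff_roots \<Longrightarrow> aff_eval a (refl_word bs x) = aff_eval (fold refl_root bs a) x"
  by (induction bs arbitrary: a) (auto simp: aff_eval_reflection refl_root_in)

lemma refl_word_rev_cancel: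
  assumes "set bs \<subseteq> aff_roots"
  shows "refl_word (rev bs) (refl_word bs x) = x" "refl_word bs (refl_word (rev bs) x) = x"
proof -
  have cancel: "refl_word (rev bs) (refl_word bs x) = x" if "set bs \<subseteq> aff_roots" for bs x
    using that by (induction bs arbitrary: x) (auto simp: aff_reflection_involution)
  from cancel[of bs] cancel[of "rev bs"] assms
  show "refl_word (rev bs) (refl_word bs x) = x" "refl_word bs (refl_word (rev bs) x) = x" by auto
qed

lemma fold_refl_root_cancel:
  assumes "set bs \<subseteq> aff_roots" "a \<in> aff_roots"
  shows "foldr refl_root bs (fold refl_root bs a) = a" "fold refl_root bs (foldr refl_root bs a) = a"
proof -
  have cancel: "foldr refl_root bs (fold refl_root bs a) = a"
    if "set bs \<subseteq> aff_roots" "a \<in> aff_roots" for bs a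
    using that by (induction bs arbitrary: a) (auto simp: refl_root_involution refl_root_in)
  from cancel[of bs] cancel[of "rev bs"] assms
  show "foldr refl_root bs (fold refl_root bs a) = a" "fold refl_root bs (foldr refl_root bs a) = a"
    by (simp_all add: foldr_conv_fold)
qed

lemma fold_refl_root_uminus:
  "set bs \<subseteq> aff_roots \<Longrightarrow> a \<in> aff_roots \<Longrightarrow> fold refl_root bs (- a) = - fold refl_root bs a"
  by (induction bs arbitrary: a) (auto simp: refl_root_uminus refl_root_in)

lemma refl_word_conj:
  "set bs \<subseteq> aff_roots \<Longrightarrow> c \<in> aff_roots \<Longrightarrow>
    refl_word bs (aff_reflection c (refl_word (rev bs) x)) = aff_reflection (foldr refl_root bs c) x"
proof (induction bs arbitrary: x)
  case (Cons b bs)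
  then show ?case using aff_reflection_conj[OF foldr_refl_root_in[of bs c], of b] by simp
qed simp

lemma refl_word_reflection:
  assumes "set bs \<subseteq> aff_roots" "b \<in> aff_roots"
  shows "refl_word bs (aff_reflection b x) = aff_reflection (foldr refl_root bs b) (refl_word bs x)"
  using refl_word_conj[OF assms, of "refl_word bs x"] refl_word_rev_cancel(1)[OF assms(1)] by simp

lemma affine_weyl_iff_refl_word: "w \<in> affine_weyl \<Phi> \<longleftrightarrow> (\<exists>ws. set ws \<subseteq> aff_roots \<and> w = refl_word ws)"
proof
  show "\<exists>ws. set ws \<subseteq> aff_roots \<and> w = refl_word ws" if "w \<in> affine_weyl \<Phi>"
    using that
  proof (induction rule: affine_weyl.induct)
    case id_in
    show ?case by (intro exI[of _ "[]"]) simp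
  next
    case (refl_comp w \<alpha> k)
    then obtain ws where "set ws \<subseteq> aff_roots" "w = refl_word ws" by auto
    then show ?case
      using refl_comp by (intro exI[of _ "(\<alpha>, k) # ws"]) (auto simp: mem_aff_roots aff_reflection_def)
  qed
  show "w \<in> affine_weyl \<Phi>" if "\<exists>ws. set ws \<subseteq> aff_roots \<and> w = refl_word ws"
  proof -
    have "refl_word ws \<in> affine_weyl \<Phi>" if "set ws \<subseteq> aff_roots" for ws
      using that
    proof (induction ws)
      case (Cons b ws)
      then show ?case
        using affine_weyl.refl_comp[of "refl_word ws" \<Phi> "fst b" "snd b"]
        by (simp add: mem_aff_roots aff_reflection_def comp_def)
    qed (simp add: affine_weyl.id_in)
    with that show ?thesis by blast
  qed
qed

lemma aff_eval_alcove_pos_iff: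
  assumes "a \<in> aff_roots" "x \<in> alcove"
  shows "aff_eval a x > 0 \<longleftrightarrow> (if nnint_comb S (fst a) then snd a \<le> 0 else snd a \<le> -1)"
proof (cases "nnint_comb S (fst a)")
  case True
  then have "0 < fst a \<bullet> x" "fst a \<bullet> x < 1"
    using alcove_pos_root assms by (auto simp: mem_aff_roots)
  then show ?thesis using True by (simp add: aff_eval_def) (cases "snd a \<le> 0"; linarith)
next
  case False
  then have "-1 < fst a \<bullet> x" "fst a \<bullet> x < 0"
    using alcove_neg_root assms by (auto simp: mem_aff_roots)
  then show ?thesis using False by (simp add: aff_eval_def) (cases "snd a \<le> -1"; linarith)
qed

lemma aff_eval_alcove_nonzero:
  assumes "a \<in> aff_roots" "x \<in> alcove" shows "aff_eval a x \<noteq> 0"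
proof
  assume zero: "aff_eval a x = 0"
  have "-1 < fst a \<bullet> x" "fst a \<bullet> x < 1" "fst a \<bullet> x \<noteq> 0"
    using alcove_pos_root[OF assms(2)] alcove_neg_root[OF assms(2)] assms(1)
    by (cases "nnint_comb S (fst a)"; fastforce simp: mem_aff_roots)+
  then have "-1 < snd a" "snd a < 1" "snd a \<noteq> 0" using zero unfolding aff_eval_def by linarith+
  then show False by simp
qed

lemma aff_eval_alcove_sign:
  "a \<in> aff_roots \<Longrightarrow> x \<in> alcove \<Longrightarrow> y \<in> alcove \<Longrightarrow> aff_eval a x > 0 \<longleftrightarrow> aff_eval a y > 0"
  using aff_eval_alcove_pos_iff by simp

section \<open>The walls of the fundamental alcove\<close>

definition simple_aff_roots :: "('a \<times> int) set" where
  "simple_aff_roots = (\<lambda>\<sigma>. (\<sigma>, 0)) ` S \<union> {(- h, -1)}"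

lemma simple_aff_roots_subset: "simple_aff_roots \<subseteq> aff_roots"
  unfolding simple_aff_roots_def using simple_subset_roots uminus_root highest_root_in
  by (auto simp: mem_aff_roots)

lemma aff_eval_simple_base_point: "b \<in> simple_aff_roots \<Longrightarrow> aff_eval b base_point > 0"
  using base_point_in_alcove unfolding simple_aff_roots_def aff_eval_def fund_alcove_def by auto

lemma aff_eval_closed_alcove_nonpos:
  assumes "a \<in> aff_roots" "aff_eval a base_point > 0" "q \<in> closed_alcove" "aff_eval a q \<le> 0"
  shows "snd a = 0 \<and> nnint_comb S (fst a) \<and> fst a \<bullet> q = 0 \<or>
         snd a = -1 \<and> - fst a \<in> \<Phi> \<and> nnint_comb S (- fst a) \<and> fst a \<bullet> q = -1"
proof (cases "nnint_comb S (fst a)")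
  case True
  then have "snd a \<le> 0"
    using aff_eval_alcove_pos_iff[OF assms(1) base_point_in_alcove] assms(2) by simp
  moreover have "fst a \<bullet> q \<ge> 0"
    using nnint_comb_inner_nonneg[OF True] assms(3) unfolding closed_alcove_def by auto
  ultimately have "snd a = 0" "fst a \<bullet> q = 0" using assms(4) unfolding aff_eval_def by linarith+
  then show ?thesis using True by simp
next
  case False
  then have "snd a \<le> -1"
    using aff_eval_alcove_pos_iff[OF assms(1) base_point_in_alcove] assms(2) by simp
  moreover have neg: "- fst a \<in> \<Phi>" "nnint_comb S (- fst a)"
    using negative_root assms(1) False by (auto simp: mem_aff_roots)
  moreover have "(- fst a) \<bullet> q \<le> h \<bullet> q"
    using root_inner_le_highest[OF neg] assms(3) unfolding closed_alcove_def by auto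
  then have "fst a \<bullet> q \<ge> -1" using assms(3) unfolding closed_alcove_def by simp
  ultimately have "snd a = -1" "fst a \<bullet> q = -1" using assms(4) unfolding aff_eval_def by linarith+
  with neg show ?thesis by simp
qed

lemma root_eq_simple:
  assumes "\<alpha> \<in> \<Phi>" "nnint_comb S \<alpha>" "\<sigma> \<in> S" "height \<alpha> = coord \<sigma> \<alpha>"
  shows "\<alpha> = \<sigma>"
proof -
  have "(\<Sum>\<tau>\<in>S - {\<sigma>}. coord \<tau> \<alpha>) = 0"
    using assms(3,4) finite_simple by (simp add: height_eq_sum_coord sum.remove)
  then have "\<forall>\<tau>\<in>S - {\<sigma>}. coord \<tau> \<alpha> = 0"
    using coord_nonneg[OF assms(2)] finite_simple by (subst (asm) sum_nonneg_eq_0_iff) auto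
  moreover have "\<alpha> = coord \<sigma> \<alpha> *\<^sub>R \<sigma> + (\<Sum>\<tau>\<in>S - {\<sigma>}. coord \<tau> \<alpha> *\<^sub>R \<tau>)"
    using simple_expansion[of \<alpha>] finite_simple assms(3) by (simp add: sum.remove)
  ultimately have "\<alpha> = coord \<sigma> \<alpha> *\<^sub>R \<sigma>" by simp
  moreover have "coord \<sigma> \<alpha> = 1 \<or> coord \<sigma> \<alpha> = -1"
    using root_multiple[of \<sigma> "coord \<sigma> \<alpha>"] assms(1,3) simple_subset_roots calculation by auto
  ultimately show ?thesis using coord_nonneg[OF assms(2,3)] by auto
qed

lemma wall_point_simple:
  assumes "\<sigma> \<in> S"
  shows "\<exists>q\<in>closed_alcove. aff_eval (\<sigma>, 0) q = 0 \<and>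
    (\<forall>a\<in>aff_roots. aff_eval a base_point > 0 \<longrightarrow> a \<noteq> (\<sigma>, 0) \<longrightarrow> aff_eval a q > 0)"
proof -
  define q where "q = (1 / (height h + 1)) *\<^sub>R (rho_vee - coweight \<sigma>)"
  have H: "height h \<ge> 1" using height_ge_one highest_root_in by blast
  have q_inner: "v \<bullet> q = (height v - coord \<sigma> v) / (height h + 1)" for v
    unfolding q_def height_def coord_def by (simp add: inner_diff_right inner_commute)
  have simple_q: "\<tau> \<bullet> q = (if \<tau> = \<sigma> then 0 else 1 / (height h + 1))" if "\<tau> \<in> S" for \<tau>
    using that assms by (simp add: q_inner height_simple coord_simple)
  have "h \<bullet> q < 1"
    using coord_nonneg[OF highest_root_in(2) assms] H by (simp add: q_inner)
  then have q: "q \<in> closed_alcove" using simple_q H unfolding closed_alcove_def by simp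
  have "aff_eval a q > 0"
    if a: "a \<in> aff_roots" "aff_eval a base_point > 0" "a \<noteq> (\<sigma>, 0)" for a
  proof (rule ccontr)
    assume "\<not> aff_eval a q > 0"
    then consider "snd a = 0" "nnint_comb S (fst a)" "fst a \<bullet> q = 0"
      | "snd a = -1" "- fst a \<in> \<Phi>" "nnint_comb S (- fst a)" "fst a \<bullet> q = -1"
      using aff_eval_closed_alcove_nonpos[OF a(1,2) q] not_less by blast
    then show False
    proof cases
      case 1
      then have "height (fst a) = coord \<sigma> (fst a)" using H by (simp add: q_inner)
      then have "fst a = \<sigma>" using root_eq_simple 1(2) a(1) assms by (simp add: mem_aff_roots)
      then show False using a(3) 1(1) by (simp add: prod_eq_iff)
    next
      case 2
      have "(- fst a) \<bullet> q \<le> h \<bullet> q"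
        using root_inner_le_highest[OF 2(2,3)] q unfolding closed_alcove_def by auto
      then show False using 2(4) \<open>h \<bullet> q < 1\<close> by simp
    qed
  qed
  moreover have "aff_eval (\<sigma>, 0) q = 0" using simple_q[OF assms] by (simp add: aff_eval_def)
  ultimately show ?thesis using q by (intro bexI[of _ q]) auto
qed

lemma wall_point_top:
  "\<exists>q\<in>closed_alcove. aff_eval (- h, -1) q = 0 \<and>
    (\<forall>a\<in>aff_roots. aff_eval a base_point > 0 \<longrightarrow> a \<noteq> (- h, -1) \<longrightarrow> aff_eval a q > 0)"
proof -
  define q where "q = (1 / height h) *\<^sub>R rho_vee"
  have H: "height h \<ge> 1" using height_ge_one highest_root_in by blast
  have q_inner: "v \<bullet> q = height v / height h" for v
    unfolding q_def height_def by simp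
  have q: "q \<in> closed_alcove" using H unfolding closed_alcove_def by (simp add: q_inner height_simple)
  have "aff_eval a q > 0"
    if a: "a \<in> aff_roots" "aff_eval a base_point > 0" "a \<noteq> (- h, -1)" for a
  proof (rule ccontr)
    assume "\<not> aff_eval a q > 0"
    then consider "nnint_comb S (fst a)" "fst a \<bullet> q = 0"
      | "snd a = -1" "- fst a \<in> \<Phi>" "nnint_comb S (- fst a)" "fst a \<bullet> q = -1"
      using aff_eval_closed_alcove_nonpos[OF a(1,2) q] not_less by blast
    then show False
    proof cases
      case 1
      then show False using height_ge_one[of "fst a"] a(1) H by (simp add: q_inner mem_aff_roots)
    next
      case 2
      then have "- fst a = h"
        using height_eq_highest[OF 2(2,3)] H by (simp add: q_inner height_uminus field_simps)
      then show False using a(3) 2(1) by (auto simp: prod_eq_iff)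
    qed
  qed
  moreover have "aff_eval (- h, -1) q = 0" using H by (simp add: aff_eval_def q_inner height_uminus)
  ultimately show ?thesis using q by (intro bexI[of _ q]) auto
qed

text \<open>The reflection in a wall of the alcove permutes the affine roots that are positive on
  the alcove, except the one defining that wall: the wall point is fixed by the reflection, and
  a sign change along the segment from it into the alcove would produce a zero inside the alcove.\<close>
lemma refl_root_simple_pos:
  assumes "b \<in> simple_aff_roots" "a \<in> aff_roots" "aff_eval a base_point > 0" "a \<noteq> b"
  shows "aff_eval (refl_root b a) base_point > 0"
proof (rule ccontr)
  assume not_pos: "\<not> ?thesis"
  from assms(1) consider \<sigma> where "\<sigma> \<in> S" "b = (\<sigma>, 0)" | "b = (- h, -1)"
    unfolding simple_aff_roots_def by blast
  then have "\<exists>q\<in>closed_alcove. aff_eval b q = 0 \<and>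
      (\<forall>a\<in>aff_roots. aff_eval a base_point > 0 \<longrightarrow> a \<noteq> b \<longrightarrow> aff_eval a q > 0)"
    by cases (simp_all add: wall_point_simple wall_point_top)
  then obtain q where q: "q \<in> closed_alcove" "aff_eval b q = 0"
    "\<forall>a\<in>aff_roots. aff_eval a base_point > 0 \<longrightarrow> a \<noteq> b \<longrightarrow> aff_eval a q > 0"
    by blast
  have b: "b \<in> aff_roots" using assms(1) simple_aff_roots_subset by blast
  define c where "c = refl_root b a"
  have c: "c \<in> aff_roots" unfolding c_def using refl_root_in[OF assms(2) b] .
  have "aff_reflection b q = q" using q(2) by (simp add: aff_reflection_eq)
  then have "aff_eval c q = aff_eval a q"
    using aff_eval_reflection[OF assms(2) b, of q] unfolding c_def by simp
  then have F: "aff_eval c q > 0" using q(3) assms(2-4) by simp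
  have G: "aff_eval c base_point < 0"
    using not_pos aff_eval_alcove_nonzero[OF c base_point_in_alcove] unfolding c_def by linarith
  define t where "t = aff_eval c q / (aff_eval c q - aff_eval c base_point)"
  have t: "0 < t" "t \<le> 1" using F G unfolding t_def by (auto simp: divide_simps)
  have "aff_eval c ((1 - t) *\<^sub>R q + t *\<^sub>R base_point) = 0"
    using F G unfolding aff_eval_segment t_def by (simp add: field_simps)
  then show False
    using aff_eval_alcove_nonzero[OF c closed_alcove_segment[OF q(1) base_point_in_alcove t]] by simp
qed

section \<open>Generation by the simple affine reflections\<close>

lemma exists_simple_aff_root_inner_pos:
  assumes "\<alpha> \<in> \<Phi>" shows "\<exists>b\<in>simple_aff_roots. \<alpha> \<bullet> fst b > 0"
proof (rule ccontr)
  assume "\<not> ?thesis"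
  then have nonpos_all: "\<forall>b\<in>simple_aff_roots. fst b \<bullet> \<alpha> \<le> 0"
    by (simp add: not_less inner_commute)
  then have simple_nonpos: "\<forall>\<sigma>\<in>S. \<sigma> \<bullet> \<alpha> \<le> 0" and "h \<bullet> \<alpha> \<ge> 0"
    unfolding simple_aff_roots_def by auto
  have nonpos: "v \<bullet> \<alpha> \<le> 0" if "nnint_comb S v" for v
    unfolding inner_simple_expansion[of v]
    using coord_nonneg[OF that] simple_nonpos by (intro sum_nonpos) (simp add: mult_nonneg_nonpos)
  show False
  proof (cases "nnint_comb S \<alpha>")
    case True
    then show False using nonpos[OF True] inner_self_root_pos[OF assms] by simp
  next
    case False
    then have "nnint_comb S (h + \<alpha>)"
      using highest_root_above[OF negative_root[OF assms False]] by simp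
    then have "h \<bullet> \<alpha> + \<alpha> \<bullet> \<alpha> \<le> 0" using nonpos[of "h + \<alpha>"] by (simp add: inner_add_left)
    then show False using inner_self_root_pos[OF assms] \<open>h \<bullet> \<alpha> \<ge> 0\<close> by linarith
  qed
qed

definition aff_height :: "'a \<times> int \<Rightarrow> real" where
  "aff_height a = height (fst a) - of_int (snd a) * (height h + 1)"

lemma aff_eval_base_point: "aff_eval a base_point = aff_height a / (height h + 1)"
proof -
  have "height h + 1 \<noteq> 0" using height_ge_one highest_root_in by fastforce
  then show ?thesis by (simp add: aff_eval_def aff_height_def inner_base_point field_simps)
qed

lemma aff_height_in_Ints: "a \<in> aff_roots \<Longrightarrow> aff_height a \<in> \<int>"
  using height_in_Ints height_in_Ints[OF highest_root_in(1)]
  unfolding aff_height_def by (simp add: mem_aff_roots)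

lemma pos_aff_root_conj_simple:
  "a \<in> aff_roots \<Longrightarrow> aff_eval a base_point > 0 \<Longrightarrow>
    \<exists>ws b. set ws \<subseteq> simple_aff_roots \<and> b \<in> simple_aff_roots \<and> a = foldr refl_root ws b"
proof (induction "nat \<lfloor>aff_height a\<rfloor>" arbitrary: a rule: less_induct)
  case less
  show ?case
  proof (cases "a \<in> simple_aff_roots")
    case True
    then show ?thesis by (intro exI[of _ "[]"] exI[of _ a]) simp
  next
    case False
    have "fst a \<in> \<Phi>" using less.prems(1) by (simp add: mem_aff_roots)
    then obtain b where b: "b \<in> simple_aff_roots" "fst a \<bullet> fst b > 0"
      using exists_simple_aff_root_inner_pos by blast
    have b_root: "b \<in> aff_roots" using b(1) simple_aff_roots_subset by blast
    define a' where "a' = refl_root b a"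
    have a': "a' \<in> aff_roots" "aff_eval a' base_point > 0"
      unfolding a'_def using refl_root_in[OF less.prems(1) b_root]
        refl_root_simple_pos[OF b(1) less.prems] False b(1) by auto
    have "of_int (cartan (fst a) (fst b)) * aff_eval b base_point > 0"
      using cartan_ge_one[OF _ _ b(2)] less.prems(1) b_root aff_eval_simple_base_point[OF b(1)]
      by (simp add: mem_aff_roots)
    then have "aff_eval a' base_point < aff_eval a base_point"
      unfolding a'_def by (simp add: aff_eval_refl_root[OF less.prems(1) b_root])
    moreover have "height h + 1 > 0" using height_ge_one[OF highest_root_in] by simp
    ultimately have "aff_height a' < aff_height a" "aff_height a' > 0"
      using a'(2) unfolding aff_eval_base_point by (simp_all add: divide_less_cancel zero_less_divide_iff)
    moreover obtain n n' where "aff_height a = of_int n" "aff_height a' = of_int n'"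
      using aff_height_in_Ints less.prems(1) a'(1) by (meson Ints_cases)
    ultimately have "nat \<lfloor>aff_height a'\<rfloor> < nat \<lfloor>aff_height a\<rfloor>" by simp
    then obtain ws b' where ws: "set ws \<subseteq> simple_aff_roots" "b' \<in> simple_aff_roots" "a' = foldr refl_root ws b'"
      using less.hyps a' by blast
    have "a = refl_root b a'" unfolding a'_def using refl_root_involution[OF less.prems(1) b_root] by simp
    then show ?thesis using ws b by (intro exI[of _ "b # ws"] exI[of _ b']) auto
  qed
qed

lemma aff_reflection_simple_word:
  assumes "a \<in> aff_roots" shows "\<exists>ws. set ws \<subseteq> simple_aff_roots \<and> aff_reflection a = refl_word ws"
proof -
  obtain a' where a': "a' \<in> aff_roots" "aff_eval a' base_point > 0" "aff_reflection a' = aff_reflection a"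
  proof (cases "aff_eval a base_point > 0")
    case False
    then have "aff_eval (- a) base_point > 0"
      using aff_eval_alcove_nonzero[OF assms base_point_in_alcove] by (simp add: aff_eval_uminus)
    then show ?thesis using that uminus_aff_root[OF assms] aff_reflection_uminus by blast
  qed (use assms in blast)
  then obtain ws b where wb: "set ws \<subseteq> simple_aff_roots" "b \<in> simple_aff_roots" "a' = foldr refl_root ws b"
    using pos_aff_root_conj_simple by blast
  moreover have "set ws \<subseteq> aff_roots" "b \<in> aff_roots" using wb simple_aff_roots_subset by auto
  ultimately have "aff_reflection a x = refl_word (ws @ [b] @ rev ws) x" for x
    using refl_word_conj[of ws b x] a'(3) by simp
  then show ?thesis using wb by (intro exI[of _ "ws @ [b] @ rev ws"]) auto
qed

lemma simple_refl_word_exists: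
  "set ws \<subseteq> aff_roots \<Longrightarrow> \<exists>bs. set bs \<subseteq> simple_aff_roots \<and> refl_word ws = refl_word bs"
proof (induction ws)
  case Nil
  then show ?case by (intro exI[of _ "[]"]) simp
next
  case (Cons a ws)
  then obtain bs where bs: "set bs \<subseteq> simple_aff_roots" "refl_word ws = refl_word bs" by auto
  have "a \<in> aff_roots" using Cons.prems by simp
  then obtain cs where cs: "set cs \<subseteq> simple_aff_roots" "aff_reflection a = refl_word cs"
    using aff_reflection_simple_word by blast
  show ?case using bs cs by (intro exI[of _ "cs @ bs"]) auto
qed

section \<open>Free action on alcoves\<close>

lemma foldr_refl_root_uminus:
  "set bs \<subseteq> aff_roots \<Longrightarrow> a \<in> aff_roots \<Longrightarrow> foldr refl_root bs (- a) = - foldr refl_root bs a"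
  by (simp add: foldr_conv_fold fold_refl_root_uminus)

lemma refl_root_simple_sign:
  assumes "b \<in> simple_aff_roots" "c \<in> aff_roots" "c \<noteq> b" "c \<noteq> - b"
  shows "aff_eval (refl_root b c) base_point > 0 \<longleftrightarrow> aff_eval c base_point > 0"
proof (cases "aff_eval c base_point > 0")
  case True
  then show ?thesis using refl_root_simple_pos assms by simp
next
  case False
  have b: "b \<in> aff_roots" using assms(1) simple_aff_roots_subset by blast
  have "aff_eval (- c) base_point > 0"
    using False aff_eval_alcove_nonzero[OF assms(2) base_point_in_alcove] by (simp add: aff_eval_uminus)
  moreover have "- c \<noteq> b" using assms(4) by auto
  ultimately have "aff_eval (refl_root b (- c)) base_point > 0"
    using refl_root_simple_pos[OF assms(1) uminus_aff_root[OF assms(2)]] by blast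
  then show ?thesis using False refl_root_uminus[OF assms(2) b] by (simp add: aff_eval_uminus)
qed

lemma refl_root_simple_self_sign:
  assumes "b \<in> aff_roots" "c = b \<or> c = - b"
  shows "aff_eval (refl_root b c) base_point > 0 \<longleftrightarrow> \<not> aff_eval c base_point > 0"
proof -
  have "refl_root b c = - c"
    using assms refl_root_self[OF assms(1)] refl_root_uminus[OF assms(1,1)] by auto
  moreover have "aff_eval c base_point \<noteq> 0"
    using assms uminus_aff_root aff_eval_alcove_nonzero base_point_in_alcove by blast
  ultimately show ?thesis by (auto simp: aff_eval_uminus)
qed

definition inversions :: "('a \<Rightarrow> 'a) \<Rightarrow> ('a \<times> int) set" where
  "inversions w = {a \<in> aff_roots. aff_eval a base_point > 0 \<and> aff_eval a (w base_point) < 0}"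

lemma aff_eval_refl_word_nonzero:
  "set bs \<subseteq> aff_roots \<Longrightarrow> a \<in> aff_roots \<Longrightarrow> aff_eval a (refl_word bs base_point) \<noteq> 0"
  using aff_eval_refl_word aff_eval_alcove_nonzero[OF fold_refl_root_in base_point_in_alcove] by metis

lemma inversions_snoc:
  assumes bs: "set bs \<subseteq> simple_aff_roots" and b: "b \<in> simple_aff_roots"
  shows "inversions (refl_word (bs @ [b])) \<subseteq>
    inversions (refl_word bs) \<union> {foldr refl_root bs b, - foldr refl_root bs b}"
proof
  fix a assume "a \<in> inversions (refl_word (bs @ [b]))"
  then have a: "a \<in> aff_roots" "aff_eval a base_point > 0" "aff_eval a (refl_word (bs @ [b]) base_point) < 0"
    unfolding inversions_def by auto
  have bs_roots: "set bs \<subseteq> aff_roots" and b_root: "b \<in> aff_roots"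
    using bs b simple_aff_roots_subset by auto
  define c where "c = fold refl_root bs a"
  have c: "c \<in> aff_roots" unfolding c_def using fold_refl_root_in[OF bs_roots a(1)] .
  have a_eq: "a = foldr refl_root bs c" unfolding c_def using fold_refl_root_cancel(1)[OF bs_roots a(1)] ..
  have snoc: "aff_eval a (refl_word (bs @ [b]) base_point) = aff_eval (refl_root b c) base_point"
    using aff_eval_refl_word[OF bs_roots a(1)] aff_eval_reflection[OF c b_root] unfolding c_def
    by simp
  show "a \<in> inversions (refl_word bs) \<union> {foldr refl_root bs b, - foldr refl_root bs b}"
  proof (cases "c = b \<or> c = - b")
    case True
    then show ?thesis using a_eq foldr_refl_root_uminus[OF bs_roots b_root] by auto
  next
    case False
    then have "\<not> aff_eval c base_point > 0"
      using refl_root_simple_sign[OF b c] snoc a(3) by auto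
    then have "aff_eval a (refl_word bs base_point) < 0"
      using aff_eval_refl_word_nonzero[OF bs_roots a(1)] aff_eval_refl_word[OF bs_roots a(1)]
      unfolding c_def by (simp add: not_less order.order_iff_strict)
    then show ?thesis using a unfolding inversions_def by auto
  qed
qed

text \<open>The affine roots of the walls crossed by the gallery
  \<open>A\<^sub>\<circ>, s\<^sub>1 A\<^sub>\<circ>, s\<^sub>1 s\<^sub>2 A\<^sub>\<circ>, \<dots>\<close> of the word \<open>s\<^sub>1 s\<^sub>2 \<dots>\<close>.\<close>
definition crossed_roots :: "('a \<times> int) list \<Rightarrow> ('a \<times> int) set" where
  "crossed_roots bs = {foldr refl_root ps c | ps c qs. bs = ps @ c # qs}"

lemma crossed_roots_snoc: "crossed_roots (bs @ [b]) = insert (foldr refl_root bs b) (crossed_roots bs)"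
proof (intro equalityI subsetI)
  fix a assume "a \<in> crossed_roots (bs @ [b])"
  then obtain ps c qs where split: "bs @ [b] = ps @ c # qs" and a: "a = foldr refl_root ps c"
    unfolding crossed_roots_def by blast
  show "a \<in> insert (foldr refl_root bs b) (crossed_roots bs)"
  proof (cases qs rule: rev_cases)
    case Nil
    then show ?thesis using split a by simp
  next
    case (snoc qs' x)
    then have "bs @ [b] = (ps @ c # qs') @ [x]" using split by simp
    then show ?thesis using a unfolding crossed_roots_def by blast
  qed
next
  fix a assume "a \<in> insert (foldr refl_root bs b) (crossed_roots bs)"
  then consider "a = foldr refl_root bs b" | ps c qs where "bs = ps @ c # qs" "a = foldr refl_root ps c"
    unfolding crossed_roots_def by blast
  then show "a \<in> crossed_roots (bs @ [b])"
  proof cases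
    case 1
    then show ?thesis unfolding crossed_roots_def
      by (intro CollectI exI[of _ bs] exI[of _ b] exI[of _ "[]"]) simp
  next
    case (2 ps c qs)
    then show ?thesis unfolding crossed_roots_def
      by (intro CollectI exI[of _ ps] exI[of _ c] exI[of _ "qs @ [b]"]) simp
  qed
qed

lemma inversions_simple_word:
  "set bs \<subseteq> simple_aff_roots \<Longrightarrow> inversions (refl_word bs) \<subseteq> crossed_roots bs \<union> uminus ` crossed_roots bs"
proof (induction bs rule: rev_induct)
  case Nil
  then show ?case unfolding inversions_def by auto
next
  case (snoc b bs)
  then have bs: "set bs \<subseteq> simple_aff_roots" and "b \<in> simple_aff_roots" by auto
  then have "inversions (refl_word (bs @ [b])) \<subseteq>
      inversions (refl_word bs) \<union> {foldr refl_root bs b, - foldr refl_root bs b}"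
    by (rule inversions_snoc)
  with snoc.IH[OF bs] show ?case unfolding crossed_roots_snoc by blast
qed

lemma refl_word_delete:
  assumes roots: "set (ps @ c # qs) \<subseteq> aff_roots" "b \<in> aff_roots"
    and same_refl: "aff_reflection (foldr refl_root (ps @ c # qs) b) = aff_reflection (foldr refl_root ps c)"
  shows "refl_word (ps @ c # qs @ [b]) = refl_word (ps @ qs)"
proof
  fix x
  let ?d = "foldr refl_root ps c"
  have ps: "set ps \<subseteq> aff_roots" "c \<in> aff_roots" using roots by auto
  have "refl_word (ps @ c # qs @ [b]) x = refl_word (ps @ c # qs) (aff_reflection b x)" by simp
  also have "\<dots> = aff_reflection ?d (refl_word (ps @ c # qs) x)"
    using refl_word_reflection[OF roots] same_refl by simp
  also have "refl_word (ps @ c # qs) x = aff_reflection ?d (refl_word ps (refl_word qs x))"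
    using refl_word_reflection[OF ps] by simp
  also have "aff_reflection ?d \<dots> = refl_word (ps @ qs) x"
    using aff_reflection_involution[OF foldr_refl_root_in[OF ps]] by simp
  finally show "refl_word (ps @ c # qs @ [b]) x = refl_word (ps @ qs) x" .
qed

lemma inversion_of_snoc_root:
  assumes bs: "set bs \<subseteq> simple_aff_roots" and b: "b \<in> simple_aff_roots"
    and no_inv: "inversions (refl_word (bs @ [b])) = {}"
  obtains a where "a \<in> inversions (refl_word bs)" "aff_reflection a = aff_reflection (foldr refl_root bs b)"
proof -
  have bs_roots: "set bs \<subseteq> aff_roots" and b_root: "b \<in> aff_roots"
    using bs b simple_aff_roots_subset by auto
  define c where "c = foldr refl_root bs b"
  have c: "c \<in> aff_roots" unfolding c_def using foldr_refl_root_in[OF bs_roots b_root] .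
  define a where "a = (if aff_eval c base_point > 0 then c else - c)"
  have a: "a \<in> aff_roots" "aff_eval a base_point > 0" "aff_reflection a = aff_reflection c"
    unfolding a_def using c uminus_aff_root aff_eval_alcove_nonzero[OF c base_point_in_alcove]
    by (auto simp: aff_eval_uminus aff_reflection_uminus)
  have "fold refl_root bs a = b \<or> fold refl_root bs a = - b"
    unfolding a_def c_def
    using fold_refl_root_cancel(2)[OF bs_roots b_root] fold_refl_root_uminus[OF bs_roots c[unfolded c_def]]
    by auto
  then have flip: "aff_eval a (refl_word (bs @ [b]) base_point) > 0 \<longleftrightarrow> \<not> aff_eval a (refl_word bs base_point) > 0"
    using refl_root_simple_self_sign[OF b_root] aff_eval_refl_word[OF bs_roots a(1)]
      aff_eval_reflection[OF fold_refl_root_in[OF bs_roots a(1)] b_root] by simp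
  have "\<not> aff_eval a (refl_word (bs @ [b]) base_point) < 0"
    using no_inv a unfolding inversions_def by blast
  moreover have "aff_eval a (refl_word (bs @ [b]) base_point) \<noteq> 0"
    using aff_eval_refl_word_nonzero[of "bs @ [b]" a] bs_roots b_root a(1) by simp
  ultimately have "aff_eval a (refl_word bs base_point) < 0"
    using flip aff_eval_refl_word_nonzero[OF bs_roots a(1)] by linarith
  then have "a \<in> inversions (refl_word bs)" using a unfolding inversions_def by auto
  then show ?thesis using that a(3) unfolding c_def by blast
qed

lemma deletion:
  assumes bs: "set bs \<subseteq> simple_aff_roots" and b: "b \<in> simple_aff_roots"
    and no_inv: "inversions (refl_word (bs @ [b])) = {}"
  shows "\<exists>cs. set cs \<subseteq> simple_aff_roots \<and> length cs \<le> length bs \<and> refl_word cs = refl_word (bs @ [b])"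
proof -
  obtain a where a: "a \<in> inversions (refl_word bs)" "aff_reflection a = aff_reflection (foldr refl_root bs b)"
    using inversion_of_snoc_root[OF assms] .
  then obtain ps c qs where split: "bs = ps @ c # qs"
    and "a = foldr refl_root ps c \<or> a = - foldr refl_root ps c"
    using inversions_simple_word[OF bs] unfolding crossed_roots_def by blast
  then have "aff_reflection (foldr refl_root (ps @ c # qs) b) = aff_reflection (foldr refl_root ps c)"
    using a(2) aff_reflection_uminus by (metis split)
  moreover have "set (ps @ c # qs) \<subseteq> aff_roots" "b \<in> aff_roots"
    using bs b split simple_aff_roots_subset by auto
  ultimately have "refl_word (bs @ [b]) = refl_word (ps @ qs)"
    using refl_word_delete split by simp
  moreover have "set (ps @ qs) \<subseteq> simple_aff_roots" "length (ps @ qs) \<le> length bs"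
    using bs split by auto
  ultimately show ?thesis by (intro exI[of _ "ps @ qs"]) auto
qed

lemma simple_word_eq_id:
  "set bs \<subseteq> simple_aff_roots \<Longrightarrow> inversions (refl_word bs) = {} \<Longrightarrow> refl_word bs = id"
proof (induction "length bs" arbitrary: bs rule: less_induct)
  case less
  show ?case
  proof (cases bs rule: rev_exhaust)
    case (snoc cs b)
    then obtain ds where "set ds \<subseteq> simple_aff_roots" "length ds < length bs" "refl_word ds = refl_word bs"
      using deletion[of cs b] less.prems by fastforce
    then show ?thesis using less.hyps[of ds] less.prems by simp
  qed simp
qed

lemma affine_weyl_free:
  assumes "w \<in> affine_weyl \<Phi>" "x \<in> alcove" "w x \<in> alcove" shows "w = id"
proof -
  obtain ws where ws: "set ws \<subseteq> aff_roots" "w = refl_word ws"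
    using assms(1) affine_weyl_iff_refl_word by blast
  obtain bs where bs: "set bs \<subseteq> simple_aff_roots" "w = refl_word bs"
    using simple_refl_word_exists[OF ws(1)] ws(2) by blast
  have "aff_eval a (w base_point) > 0" if "a \<in> aff_roots" "aff_eval a base_point > 0" for a
  proof -
    have "aff_eval a (w x) > 0" using that aff_eval_alcove_sign[OF that(1) base_point_in_alcove assms(3)] by simp
    then show ?thesis
      using aff_eval_refl_word[OF ws(1) that(1)] ws(2) assms(2)
        aff_eval_alcove_sign[OF fold_refl_root_in[OF ws(1) that(1)] base_point_in_alcove] by simp
  qed
  then have "inversions w = {}" unfolding inversions_def by fastforce
  then show ?thesis using simple_word_eq_id bs by simp
qed

section \<open>The strip numbers \<open>r(w, \<alpha>)\<close>\<close>

lemma affine_weyl_inverse: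
  assumes "w \<in> affine_weyl \<Phi>"
  obtains v where "v \<in> affine_weyl \<Phi>" "\<And>x. v (w x) = x" "\<And>x. w (v x) = x"
proof -
  obtain ws where ws: "set ws \<subseteq> aff_roots" "w = refl_word ws"
    using assms affine_weyl_iff_refl_word by blast
  have "refl_word (rev ws) \<in> affine_weyl \<Phi>"
    unfolding affine_weyl_iff_refl_word using ws(1) by (intro exI[of _ "rev ws"]) simp
  then show ?thesis by (rule that) (simp_all add: ws(2) refl_word_rev_cancel[OF ws(1)])
qed

lemma affine_weyl_comp:
  assumes "w \<in> affine_weyl \<Phi>" "v \<in> affine_weyl \<Phi>" shows "w \<circ> v \<in> affine_weyl \<Phi>"
proof -
  obtain ws vs where "set ws \<subseteq> aff_roots" "w = refl_word ws" "set vs \<subseteq> aff_roots" "v = refl_word vs"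
    using assms affine_weyl_iff_refl_word by meson
  then show ?thesis
    unfolding affine_weyl_iff_refl_word by (intro exI[of _ "ws @ vs"]) (auto simp: fun_eq_iff)
qed

lemma affine_weyl_root_pullback:
  assumes "w \<in> affine_weyl \<Phi>" "\<alpha> \<in> \<Phi>"
  obtains \<beta> n where "\<beta> \<in> \<Phi>" "\<And>x. \<alpha> \<bullet> w x = \<beta> \<bullet> x - of_int n"
proof -
  obtain ws where ws: "set ws \<subseteq> aff_roots" "w = refl_word ws"
    using assms(1) affine_weyl_iff_refl_word by blast
  have root: "(\<alpha>, 0) \<in> aff_roots" using assms(2) by (simp add: mem_aff_roots)
  let ?b = "fold refl_root ws (\<alpha>, 0)"
  have "fst ?b \<in> \<Phi>" using fold_refl_root_in[OF ws(1) root] by (simp add: mem_aff_roots)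
  moreover have "\<alpha> \<bullet> w x = fst ?b \<bullet> x - of_int (snd ?b)" for x
    using aff_eval_refl_word[OF ws(1) root, of x] ws(2) by (simp add: aff_eval_def)
  ultimately show ?thesis by (rule that)
qed

lemma affine_weyl_strip:
  assumes "w \<in> affine_weyl \<Phi>" "\<alpha> \<in> \<Phi>"
  shows "\<exists>r::int. \<forall>y\<in>w ` alcove. of_int r - 1 < \<alpha> \<bullet> y \<and> \<alpha> \<bullet> y < of_int r"
proof -
  obtain \<beta> n where \<beta>: "\<beta> \<in> \<Phi>" "\<And>x. \<alpha> \<bullet> w x = \<beta> \<bullet> x - of_int n"
    using affine_weyl_root_pullback[OF assms] by blast
  show ?thesis
  proof (cases "nnint_comb S \<beta>")
    case True
    then show ?thesis using alcove_pos_root[OF _ \<beta>(1)] \<beta>(2) by (intro exI[of _ "1 - n"]) auto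
  next
    case False
    then show ?thesis using alcove_neg_root[OF _ \<beta>(1)] \<beta>(2) by (intro exI[of _ "- n"]) auto
  qed
qed

lemma r_of_strip:
  assumes "w \<in> affine_weyl \<Phi>" "\<alpha> \<in> \<Phi>" "y \<in> w ` alcove"
  shows "of_int (r_of alcove w \<alpha>) - 1 < \<alpha> \<bullet> y" "\<alpha> \<bullet> y < of_int (r_of alcove w \<alpha>)"
proof -
  obtain r :: int where "\<forall>y\<in>w ` alcove. of_int r - 1 < \<alpha> \<bullet> y \<and> \<alpha> \<bullet> y < of_int r"
    using affine_weyl_strip[OF assms(1,2)] by blast
  moreover have "r_of alcove w \<alpha> = r"
    using r_of_eqI[OF _ calculation] base_point_in_alcove by blast
  ultimately show "of_int (r_of alcove w \<alpha>) - 1 < \<alpha> \<bullet> y" "\<alpha> \<bullet> y < of_int (r_of alcove w \<alpha>)"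
    using assms(3) by auto
qed

lemma r_of_uminus:
  assumes "w \<in> affine_weyl \<Phi>" "\<alpha> \<in> \<Phi>" shows "r_of alcove w (- \<alpha>) = 1 - r_of alcove w \<alpha>"
proof (rule r_of_eqI)
  show "\<forall>y\<in>w ` alcove. of_int (1 - r_of alcove w \<alpha>) - 1 < - \<alpha> \<bullet> y \<and> - \<alpha> \<bullet> y < of_int (1 - r_of alcove w \<alpha>)"
    using r_of_strip[OF assms] by fastforce
qed (use base_point_in_alcove in blast)

lemma r_of_eq_on_roots:
  assumes w: "w \<in> affine_weyl \<Phi>" and w': "w' \<in> affine_weyl \<Phi>"
    and r_eq: "\<forall>\<alpha>\<in>pos_roots \<Phi> S. r_of alcove w \<alpha> = r_of alcove w' \<alpha>" and \<beta>: "\<beta> \<in> \<Phi>"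
  shows "r_of alcove w \<beta> = r_of alcove w' \<beta>"
proof (cases "nnint_comb S \<beta>")
  case True
  then show ?thesis using r_eq \<beta> by (simp add: pos_roots_iff)
next
  case False
  then have "- \<beta> \<in> pos_roots \<Phi> S" using negative_root[OF \<beta>] by (simp add: pos_roots_iff)
  then have "r_of alcove w (- \<beta>) = r_of alcove w' (- \<beta>)" using r_eq by blast
  then show ?thesis using r_of_uminus[OF w \<beta>] r_of_uminus[OF w' \<beta>] by simp
qed

lemma affine_weyl_eqI:
  assumes w: "w \<in> affine_weyl \<Phi>" and w': "w' \<in> affine_weyl \<Phi>"
    and r_eq: "\<forall>\<alpha>\<in>pos_roots \<Phi> S. r_of alcove w \<alpha> = r_of alcove w' \<alpha>"
  shows "w = w'"
proof -
  obtain v where v: "v \<in> affine_weyl \<Phi>" "\<And>x. v (w' x) = x" "\<And>x. w' (v x) = x"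
    using affine_weyl_inverse[OF w'] by blast
  have "v (w base_point) \<in> alcove"
  proof (rule alcoveI, intro ballI impI)
    fix \<alpha> assume \<alpha>: "\<alpha> \<in> \<Phi>" "nnint_comb S \<alpha>"
    obtain \<beta> n where \<beta>: "\<beta> \<in> \<Phi>" "\<And>x. \<alpha> \<bullet> v x = \<beta> \<bullet> x - of_int n"
      using affine_weyl_root_pullback[OF v(1) \<alpha>(1)] by blast
    let ?r = "r_of alcove w' \<beta>"
    have "0 < \<alpha> \<bullet> base_point" "\<alpha> \<bullet> base_point < 1"
      using alcove_pos_root[OF base_point_in_alcove \<alpha>] by auto
    moreover have "\<alpha> \<bullet> base_point = \<beta> \<bullet> w' base_point - of_int n" using \<beta>(2) v(2) by metis
    moreover have "of_int ?r - 1 < \<beta> \<bullet> w' base_point" "\<beta> \<bullet> w' base_point < of_int ?r"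
      using r_of_strip[OF w' \<beta>(1)] base_point_in_alcove by auto
    ultimately have "n = ?r - 1" by linarith
    moreover have "of_int ?r - 1 < \<beta> \<bullet> w base_point" "\<beta> \<bullet> w base_point < of_int ?r"
      using r_of_strip[OF w \<beta>(1)] r_of_eq_on_roots[OF w w' r_eq \<beta>(1)] base_point_in_alcove by auto
    ultimately show "0 < \<alpha> \<bullet> v (w base_point) \<and> \<alpha> \<bullet> v (w base_point) < 1"
      using \<beta>(2) by simp
  qed
  then have "v \<circ> w = id"
    using affine_weyl_free[OF affine_weyl_comp[OF v(1) w] base_point_in_alcove] by simp
  then have "w x = w' x" for x using v(3)[of "w x"] fun_cong[of "v \<circ> w" id x] by (metis comp_apply id_apply)
  then show ?thesis by blast
qed

end

section \<open>Bounded dominant regions\<close>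

lemma bounded_ray_escapes:
  fixes x v :: "'a::real_normed_vector"
  assumes "bounded X" "v \<noteq> 0" shows "\<exists>t\<ge>0. x + t *\<^sub>R v \<notin> X"
proof -
  obtain B where B: "\<forall>y\<in>X. norm y \<le> B" using assms(1) unfolding bounded_iff by blast
  define t where "t = (\<bar>B\<bar> + norm x + 1) / norm v"
  have "norm (t *\<^sub>R v) = \<bar>B\<bar> + norm x + 1"
    unfolding t_def using assms(2) by (simp add: abs_of_nonneg add_nonneg_pos)
  then have "norm (x + t *\<^sub>R v) > B"
    using norm_triangle_ineq4[of "x + t *\<^sub>R v" x] by simp
  moreover have "t \<ge> 0" unfolding t_def by simp
  ultimately show ?thesis using B by force
qed

lemma nnint_comb_sum_list:
  assumes "finite S" "nnint_comb S v" shows "\<exists>xs. set xs \<subseteq> S \<and> sum_list xs = v"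
proof -
  obtain c where c: "\<forall>\<sigma>\<in>S. c \<sigma> \<in> \<nat>" "v = (\<Sum>\<sigma>\<in>S. c \<sigma> *\<^sub>R \<sigma>)"
    using assms(2) unfolding nnint_comb_def by blast
  obtain \<sigma>s where \<sigma>s: "set \<sigma>s = S" "distinct \<sigma>s" using finite_distinct_list[OF assms(1)] by blast
  define xs where "xs = concat (map (\<lambda>\<sigma>. replicate (nat \<lfloor>c \<sigma>\<rfloor>) \<sigma>) \<sigma>s)"
  have replicate: "sum_list (replicate n \<sigma>) = real n *\<^sub>R \<sigma>" for n and \<sigma> :: 'a
    by (induction n) (simp_all add: algebra_simps)
  have "sum_list xs = (\<Sum>\<sigma>\<leftarrow>\<sigma>s. real (nat \<lfloor>c \<sigma>\<rfloor>) *\<^sub>R \<sigma>)"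
    unfolding xs_def by (induction \<sigma>s) (simp_all add: replicate)
  also have "\<dots> = (\<Sum>\<sigma>\<in>S. c \<sigma> *\<^sub>R \<sigma>)"
    using c(1) \<sigma>s by (simp add: sum_list_distinct_conv_sum_set) (auto elim!: Nats_cases intro!: sum.cong)
  finally have "sum_list xs = v" using c(2) by simp
  moreover have "set xs \<subseteq> S" unfolding xs_def using \<sigma>s(1) by auto
  ultimately show ?thesis by blast
qed

lemma convex_combination_ne:
  fixes a b k u :: real
  assumes "0 \<le> u" "u \<le> 1" "(a < k \<and> b < k) \<or> (a > k \<and> b > k)"
  shows "(1 - u) * a + u * b \<noteq> k"
proof -
  have "(1 - u) * a + u * b < k" if "a < k" "b < k" using convex_bound_lt[OF that, of "1 - u" u] assms by simp
  moreover have "(1 - u) * (- a) + u * (- b) < - k" if "a > k" "b > k"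
    using convex_bound_lt[of "- a" "- k" "- b" "1 - u" u] that assms by simp
  ultimately show ?thesis using assms(3) by (auto simp: algebra_simps)
qed

lemma r_alpha_le: "\<alpha> \<in> J k \<Longrightarrow> k \<le> m \<Longrightarrow> r_alpha J m \<alpha> \<le> k"
  unfolding r_alpha_def by (rule Least_le) (rule exI[of _ "[(\<alpha>, k)]"], simp)

lemma sum_list_phi_chain_less:
  assumes "ps \<noteq> []" "\<forall>(\<beta>, i)\<in>set ps. \<beta> \<in> phi_chain \<Phi> S R i" "y \<in> R"
  shows "sum_list (map fst ps) \<bullet> y < real (sum_list (map snd ps))"
  using assms
proof (induction ps)
  case (Cons p ps)
  have "fst p \<bullet> y < real (snd p)"
    using Cons.prems(2,3) unfolding phi_chain_def by (cases p) auto
  moreover have "sum_list (map fst ps) \<bullet> y \<le> real (sum_list (map snd ps))"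
    using Cons by (cases "ps = []") auto
  ultimately show ?case by (simp add: inner_add_left)
qed simp

locale dominant_region = simple_root_system +
  fixes m :: nat and R :: "'a set"
  assumes region: "is_region \<Phi> m R" and dominant_region: "dominant \<Phi> S R"
    and bounded_region: "bounded R"
begin

definition shi_complement :: "'a set" where
  "shi_complement = - \<Union>(shi_hyperplanes \<Phi> m)"

lemma mem_shi_complement: "y \<in> shi_complement \<longleftrightarrow> (\<forall>\<alpha>\<in>\<Phi>. \<forall>k. k \<le> m \<longrightarrow> \<alpha> \<bullet> y \<noteq> real k)"
  unfolding shi_complement_def shi_hyperplanes_def by auto

lemma region_component: obtains x0 where "x0 \<in> R" "R = connected_component_set shi_complement x0"
  using region unfolding is_region_def shi_complement_def by force

lemma region_subset: "R \<subseteq> shi_complement"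
  by (metis region_component connected_component_subset)

lemma region_connected: "connected R"
  by (metis region_component connected_connected_component)

lemma region_maximal:
  assumes "connected T" "T \<subseteq> shi_complement" "z \<in> T" "z \<in> R" shows "T \<subseteq> R"
  by (metis assms region_component connected_component_eq connected_component_maximal)

lemma region_off_hyperplanes: "y \<in> R \<Longrightarrow> \<alpha> \<in> \<Phi> \<Longrightarrow> k \<le> m \<Longrightarrow> \<alpha> \<bullet> y \<noteq> real k"
  using region_subset mem_shi_complement by blast

lemma region_pos_root: "y \<in> R \<Longrightarrow> \<alpha> \<in> \<Phi> \<Longrightarrow> nnint_comb S \<alpha> \<Longrightarrow> \<alpha> \<bullet> y > 0"
  using dominant_region unfolding dominant_def pos_roots_def by auto

lemma region_same_side:
  assumes "y \<in> R" "z \<in> R" "\<alpha> \<in> \<Phi>" "k \<le> m" shows "\<alpha> \<bullet> y < real k \<longleftrightarrow> \<alpha> \<bullet> z < real k"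
proof -
  have False if "u \<in> R" "v \<in> R" "\<alpha> \<bullet> u < real k" "\<not> \<alpha> \<bullet> v < real k" for u v
    using connected_ivt_hyperplane[OF region_connected that(1,2), of \<alpha> "real k"] that
      region_off_hyperplanes assms(3,4) by force
  then show ?thesis using assms(1,2) by blast
qed

text \<open>Moving from a point of \<open>R\<close> in the direction of a coweight \<open>\<sigma>\<close> only increases the
  roots involving \<open>\<sigma>\<close>, and these already exceed \<open>m\<close> as soon as \<open>(\<sigma>, y) > m\<close>.\<close>
lemma coweight_ray_off_hyperplanes:
  assumes "\<sigma> \<in> S" "y \<in> R" "\<sigma> \<bullet> y > real m" "t \<ge> 0" "\<alpha> \<in> \<Phi>" "k \<le> m"
  shows "\<alpha> \<bullet> (y + t *\<^sub>R coweight \<sigma>) \<noteq> real k"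
proof -
  have inner_ray: "\<beta> \<bullet> (y + t *\<^sub>R coweight \<sigma>) = \<beta> \<bullet> y + t * coord \<sigma> \<beta>" for \<beta>
    by (simp add: coord_def inner_add_right inner_commute)
  show ?thesis
  proof (cases "nnint_comb S \<alpha>")
    case True
    show ?thesis
    proof (cases "coord \<sigma> \<alpha> = 0")
      case True
      then show ?thesis using inner_ray region_off_hyperplanes[OF assms(2,5,6)] by simp
    next
      case False
      then have "coord \<sigma> \<alpha> \<ge> 1"
        using nnint_comb_iff_coord \<open>nnint_comb S \<alpha>\<close> assms(1) by (auto elim!: Nats_cases)
      have "\<tau> \<bullet> y \<ge> 0" if "\<tau> \<in> S" for \<tau>
        using region_pos_root[OF assms(2)] simple_subset_roots simple_nnint_comb that
        by (simp add: less_imp_le subset_iff)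
      then have "coord \<sigma> \<alpha> * (\<sigma> \<bullet> y) \<le> (\<Sum>\<tau>\<in>S. coord \<tau> \<alpha> * (\<tau> \<bullet> y))"
        using coord_nonneg[OF True] assms(1) finite_simple by (intro member_le_sum) auto
      moreover have "\<sigma> \<bullet> y \<le> coord \<sigma> \<alpha> * (\<sigma> \<bullet> y)"
        using \<open>coord \<sigma> \<alpha> \<ge> 1\<close> assms(3) by (simp add: mult_le_cancel_right1)
      moreover have "t * coord \<sigma> \<alpha> \<ge> 0" using \<open>coord \<sigma> \<alpha> \<ge> 1\<close> assms(4) by simp
      moreover have "real k \<le> real m" using assms(6) by simp
      ultimately show ?thesis
        using inner_ray[of \<alpha>] inner_simple_expansion[of \<alpha> y] assms(3) by linarith
    qed
  next
    case False
    have "(- \<alpha>) \<bullet> (y + t *\<^sub>R coweight \<sigma>) > 0"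
      using region_pos_root[OF assms(2) negative_root[OF assms(5) False]] inner_ray[of "- \<alpha>"]
        coord_nonneg[OF negative_root(2)[OF assms(5) False] assms(1)] assms(4)
      by (simp add: add_pos_nonneg) (metis less_le_trans mult_nonneg_nonneg)
    then show ?thesis by simp
  qed
qed

lemma coweight_ray_in_region:
  assumes "\<sigma> \<in> S" "y \<in> R" "\<sigma> \<bullet> y > real m" "t \<ge> 0"
  shows "y + t *\<^sub>R coweight \<sigma> \<in> R"
proof -
  define T where "T = (\<lambda>t. y + t *\<^sub>R coweight \<sigma>) ` {0..}"
  have "T \<subseteq> shi_complement"
    unfolding T_def using coweight_ray_off_hyperplanes[OF assms(1-3)] by (auto simp: mem_shi_complement)
  moreover have "connected T" unfolding T_def
    by (intro connected_continuous_image continuous_intros) simp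
  moreover have "y \<in> T" unfolding T_def by (auto intro: image_eqI[of _ _ 0])
  ultimately have "T \<subseteq> R" using region_maximal assms(2) by blast
  then show ?thesis unfolding T_def using assms(4) by auto
qed

lemma simple_root_below_m: assumes "\<sigma> \<in> S" "y \<in> R" shows "\<sigma> \<bullet> y < real m"
proof (rule ccontr)
  assume "\<not> ?thesis"
  then have "\<sigma> \<bullet> y > real m" using region_off_hyperplanes[OF assms(2)] assms(1) simple_subset_roots
    by (metis linorder_neqE_linordered_idom order_refl subset_iff)
  moreover have "coweight \<sigma> \<noteq> 0"
    using coord_simple[OF assms(1) assms(1)] by (auto simp: coord_def)
  ultimately show False
    using bounded_ray_escapes[OF bounded_region, of "coweight \<sigma>" y] coweight_ray_in_region assms by blast
qed

lemma r_alpha_decomposition: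
  assumes "\<alpha> \<in> pos_roots \<Phi> S"
  shows "\<exists>n ps. ps \<noteq> [] \<and> (\<forall>(\<beta>, i)\<in>set ps. i \<le> m \<and> \<beta> \<in> phi_chain \<Phi> S R i) \<and>
       sum_list (map fst ps) = \<alpha> \<and> sum_list (map snd ps) = n"
proof -
  obtain xs where xs: "set xs \<subseteq> S" "sum_list xs = \<alpha>"
    using nnint_comb_sum_list[OF finite_simple] assms by (auto simp: pos_roots_iff)
  have "\<forall>(\<beta>, i)\<in>set (map (\<lambda>\<sigma>. (\<sigma>, m)) xs). i \<le> m \<and> \<beta> \<in> phi_chain \<Phi> S R i"
    using xs(1) simple_root_below_m simple_subset_roots simple_nnint_comb
    unfolding phi_chain_def pos_roots_def by auto
  moreover have "\<alpha> \<noteq> 0" using assms root_nonzero by (simp add: pos_roots_iff)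
  then have "xs \<noteq> []" using xs(2) by auto
  ultimately show ?thesis using xs(2)
    by (intro exI[of _ "m * length xs"] exI[of _ "map (\<lambda>\<sigma>. (\<sigma>, m)) xs"])
      (simp add: comp_def sum_list_triv)
qed

lemma r_alpha_bound:
  assumes "\<alpha> \<in> pos_roots \<Phi> S" "y \<in> R" shows "\<alpha> \<bullet> y < real (r_alpha (phi_chain \<Phi> S R) m \<alpha>)"
proof -
  obtain ps where "ps \<noteq> []" "\<forall>(\<beta>, i)\<in>set ps. i \<le> m \<and> \<beta> \<in> phi_chain \<Phi> S R i"
    "sum_list (map fst ps) = \<alpha>" "sum_list (map snd ps) = r_alpha (phi_chain \<Phi> S R) m \<alpha>"
    using LeastI_ex[OF r_alpha_decomposition[OF assms(1)]] unfolding r_alpha_def by blast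
  then show ?thesis using sum_list_phi_chain_less[of ps] assms(2) by fastforce
qed

definition minimal_alcove :: "('a \<Rightarrow> 'a) \<Rightarrow> bool" where
  "minimal_alcove w \<longleftrightarrow> w ` alcove \<subseteq> R \<and>
     (\<forall>\<alpha>\<in>pos_roots \<Phi> S. \<forall>r::int. (\<exists>x\<in>R. \<alpha> \<bullet> x > of_int r) \<longrightarrow> (\<forall>x\<in>w ` alcove. \<alpha> \<bullet> x > of_int r))"

abbreviation r_phi :: "'a \<Rightarrow> int" where
  "r_phi \<alpha> \<equiv> int (r_alpha (phi_chain \<Phi> S R) m \<alpha>)"

lemma mem_region_if_same_sides:
  assumes "x \<in> R"
    and sides: "\<And>\<alpha> k. \<alpha> \<in> \<Phi> \<Longrightarrow> k \<le> m \<Longrightarrow>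
      (\<alpha> \<bullet> x < real k \<and> \<alpha> \<bullet> y < real k) \<or> (\<alpha> \<bullet> x > real k \<and> \<alpha> \<bullet> y > real k)"
  shows "y \<in> R"
proof -
  have "closed_segment x y \<subseteq> shi_complement"
  proof
    fix z assume "z \<in> closed_segment x y"
    then obtain u where u: "0 \<le> u" "u \<le> 1" "z = (1 - u) *\<^sub>R x + u *\<^sub>R y" by (auto simp: in_segment)
    have "\<alpha> \<bullet> z \<noteq> real k" if "\<alpha> \<in> \<Phi>" "k \<le> m" for \<alpha> k
      using convex_combination_ne[OF u(1,2) sides[OF that]] u(3) by (simp add: inner_add_right)
    then show "z \<in> shi_complement" unfolding mem_shi_complement by blast
  qed
  then show ?thesis using region_maximal[OF connected_segment _ _ assms(1)] by auto
qed

context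
  fixes w :: "'a \<Rightarrow> 'a"
  assumes w: "w \<in> affine_weyl \<Phi>" and r_of_w: "\<forall>\<alpha>\<in>pos_roots \<Phi> S. r_of alcove w \<alpha> = r_phi \<alpha>"
begin

lemma alcove_strip_r_phi:
  assumes "\<alpha> \<in> pos_roots \<Phi> S" "y \<in> w ` alcove"
  shows "of_int (r_phi \<alpha>) - 1 < \<alpha> \<bullet> y" "\<alpha> \<bullet> y < of_int (r_phi \<alpha>)"
  using r_of_strip[OF w _ assms(2), of \<alpha>] r_of_w assms(1) by (auto simp: pos_roots_iff)

lemma alcove_above_region:
  assumes "\<alpha> \<in> pos_roots \<Phi> S" "x \<in> R" "\<alpha> \<bullet> x > of_int r" "y \<in> w ` alcove"
  shows "\<alpha> \<bullet> y > of_int r"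
proof -
  have "(of_int r :: real) < of_int (r_phi \<alpha>)"
    using r_alpha_bound[OF assms(1,2)] assms(3) by (simp only: of_int_of_nat_eq)
  then have "r \<le> r_phi \<alpha> - 1" by linarith
  then show ?thesis using alcove_strip_r_phi[OF assms(1,4)] by linarith
qed

lemma alcove_same_sides:
  assumes "x \<in> R" "y \<in> w ` alcove" "\<alpha> \<in> \<Phi>" "k \<le> m"
  shows "(\<alpha> \<bullet> x < real k \<and> \<alpha> \<bullet> y < real k) \<or> (\<alpha> \<bullet> x > real k \<and> \<alpha> \<bullet> y > real k)"
proof (cases "nnint_comb S \<alpha>")
  case True
  then have pos: "\<alpha> \<in> pos_roots \<Phi> S" using assms(3) by (simp add: pos_roots_iff)
  consider "\<alpha> \<bullet> x < real k" | "\<alpha> \<bullet> x > real k"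
    using region_off_hyperplanes[OF assms(1,3,4)] by linarith
  then show ?thesis
  proof cases
    case 1
    then have "\<alpha> \<in> phi_chain \<Phi> S R k"
      using region_same_side[OF _ assms(1,3,4)] pos unfolding phi_chain_def by blast
    then have "r_phi \<alpha> \<le> k" using r_alpha_le assms(4) by simp
    then show ?thesis using 1 alcove_strip_r_phi[OF pos assms(2)] by linarith
  next
    case 2
    then show ?thesis using alcove_above_region[OF pos assms(1) _ assms(2), of "int k"] by simp
  qed
next
  case False
  then have "- \<alpha> \<in> pos_roots \<Phi> S" using negative_root[OF assms(3)] by (simp add: pos_roots_iff)
  moreover have "(- \<alpha>) \<bullet> x > 0" using region_pos_root[OF assms(1) negative_root[OF assms(3) False]] .
  ultimately have "(- \<alpha>) \<bullet> y > of_int 0" using alcove_above_region[of "- \<alpha>" x 0 y] assms(1,2) by simp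
  then show ?thesis using \<open>(- \<alpha>) \<bullet> x > 0\<close> by simp
qed

lemma minimal_alcove_if_r_of_eq: "minimal_alcove w"
proof -
  obtain x0 where "x0 \<in> R" using region_component by blast
  then have "w ` alcove \<subseteq> R" using mem_region_if_same_sides alcove_same_sides by blast
  then show ?thesis unfolding minimal_alcove_def using alcove_above_region by blast
qed

lemma r_of_eq_if_minimal_alcove:
  assumes w': "w' \<in> affine_weyl \<Phi>" "minimal_alcove w'" and \<alpha>: "\<alpha> \<in> pos_roots \<Phi> S"
  shows "r_of alcove w' \<alpha> = r_phi \<alpha>"
proof (rule r_of_eqI)
  have "w base_point \<in> R" "of_int (r_phi \<alpha> - 1) < \<alpha> \<bullet> w base_point"
    using minimal_alcove_if_r_of_eq alcove_strip_r_phi[OF \<alpha>] base_point_in_alcove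
    unfolding minimal_alcove_def by auto
  then have above: "of_int (r_phi \<alpha> - 1) < \<alpha> \<bullet> y" if "y \<in> w' ` alcove" for y
    using assms(2) \<alpha> that unfolding minimal_alcove_def by blast
  have below: "\<alpha> \<bullet> y < of_int (r_phi \<alpha>)" if "y \<in> w' ` alcove" for y
    using assms(2) r_alpha_bound[OF \<alpha>] that unfolding minimal_alcove_def by auto
  show "\<forall>y\<in>w' ` alcove. of_int (r_phi \<alpha>) - 1 < \<alpha> \<bullet> y \<and> \<alpha> \<bullet> y < of_int (r_phi \<alpha>)"
    using above below by fastforce
qed (use base_point_in_alcove in blast)

end

end

theorem proposition3p7:
  fixes \<Phi> S :: "'a::euclidean_space set" and h :: 'a and m :: nat
    and R :: "'a set" and wR :: "'a \<Rightarrow> 'a"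
  assumes "crystallographic_root_system \<Phi>" and "irreducible_rs \<Phi>"
    and "simple_system \<Phi> S" and "highest_root \<Phi> S h" and "m \<ge> 1"
    and "is_region \<Phi> m R" and "dominant \<Phi> S R" and "bounded R"
    and "wR \<in> affine_weyl \<Phi>"
    and "\<forall>\<alpha>\<in>pos_roots \<Phi> S.
           r_of (fund_alcove S h) wR \<alpha> = int (r_alpha (phi_chain \<Phi> S R) m \<alpha>)"
  shows "(wR ` fund_alcove S h \<subseteq> R \<and>
          (\<forall>\<alpha>\<in>pos_roots \<Phi> S. \<forall>r::int. (\<exists>x\<in>R. \<alpha> \<bullet> x > real_of_int r) \<longrightarrow>
              (\<forall>x\<in>wR ` fund_alcove S h. \<alpha> \<bullet> x > real_of_int r)))
       \<and> (\<forall>w\<in>affine_weyl \<Phi>.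
            (w ` fund_alcove S h \<subseteq> R \<and>
             (\<forall>\<alpha>\<in>pos_roots \<Phi> S. \<forall>r::int. (\<exists>x\<in>R. \<alpha> \<bullet> x > real_of_int r) \<longrightarrow>
                 (\<forall>x\<in>w ` fund_alcove S h. \<alpha> \<bullet> x > real_of_int r)))
            \<longrightarrow> w = wR)"
proof -
  interpret dominant_region \<Phi> S h m R
    using assms by unfold_locales
  note wR = assms(9) and r_of_wR = assms(10)
  have "minimal_alcove wR" using minimal_alcove_if_r_of_eq[OF wR r_of_wR] .
  moreover have "w = wR" if "w \<in> affine_weyl \<Phi>" "minimal_alcove w" for w
    using affine_weyl_eqI[OF that(1) wR] r_of_eq_if_minimal_alcove[OF wR r_of_wR that] r_of_wR
    by simp
  ultimately have "minimal_alcove wR \<and> (\<forall>w\<in>affine_weyl \<Phi>. minimal_alcove w \<longrightarrow> w = wR)"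
    by blast
  then show ?thesis unfolding minimal_alcove_def .
qed

end
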